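(* Let $\star$ be a continuous and sup-continuous triangle function and let $(G,\cdot,D,\star)$ be an invariant probabilistic metric group with identity $e$ (not necessarily complete). Then the group of invertible elements of the monoid $(Lip^1_\star(G,\Delta^+),\odot)$ is $$\mathcal U(Lip^1_\star(G,\Delta^+))=\langle\Pi(G),\mathcal U(\Delta^+)\rangle:=\{\langle f,U\rangle: f\in\Pi(G),\ U\in\mathcal U(\Delta^+)\}.$$ Moreover: (1) for all $f\in\Pi(G)$ and $U\in\mathcal U(\Delta^+)$, $\langle f,U\rangle^{-1}=\langle f^{-1},U^{-1}\rangle$ (where $f^{-1}$ is the inverse of $f$ in the group $(\Pi(G),\odot)$ and $U^{-1}$ the inverse of $U$ in $(\Delta^+,\star)$); (2) if $\mathcal U(\Delta^+)=\{\mathcal H_0\}$, then $(\mathcal U(Lip^1_\star(G,\Delta^+)),\odot,\mathbb D,\star)=(\Pi(G),\odot,\mathbb D,\star)$; (3) if $\mathcal U(\Delta^+)=\{\mathcal H_0\}$ and $G$ is complete, then $(\mathcal U(Lip^1_\star(G,\Delta^+)),\odot,\mathbb D,\star)=(\{\delta_a:a\in G\},\odot,\mathbb D,\star)$, which is isometrically isomorphic (via $\delta$) to $(G,\cdot,D,\star)$.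
   Context: A distribution function is a nondecreasing, left-continuous function $F:[-\infty,+\infty]\to[0,1]$ with $F(-\infty)=0$, $F(+\infty)=1$; $\Delta^+$ is the set of distribution functions with $F(0)=0$, ordered pointwise (a complete lattice with maximum $\mathcal H_0$, $\mathcal H_0(t)=0$ for $t\le0$, $1$ for $t>0$). A triangle function is a binary operation $\star$ on $\Delta^+$ that is commutative, associative, nondecreasing in each argument, with $F\star\mathcal H_0=F$; so $(\Delta^+,\star)$ is a commutative monoid, and $\mathcal U(\Delta^+)$ denotes its group of invertible elements. $\star$ is sup-continuous if $\sup_i(F_i\star L)=(\sup_iF_i)\star L$ for every nonempty family $(F_i)$ and every $L$. $F_n\xrightarrow{w}F$ means $F_n(t)\to F(t)$ at every continuity point $t\in\mathbb R$ of $F$; $\star$ is continuous if $F_n\star L_n\xrightarrow{w}F\star L$ whenever $F_n\xrightarrow{w}F$, $L_n\xrightarrow{w}L$. A probabilistic metric space $(G,D,\star)$ consists of a set $G$, a triangle function $\star$ and $D:G\times G\to\Delta^+$ with (i) $D(p,q)=\mathcal H_0$ iff $p=q$; (ii) $D(p,q)=D(q,p)$; (iii) $D(p,q)\star D(q,r)\le D(p,r)$. If $(G,\cdot)$ is a group and $D(pr,qr)=D(rp,rq)=D(p,q)$ for all $p,q,r$, it is an invariant probabilistic metric group. A sequence $(z_n)$ is Cauchy if $D(z_n,z_p)\xrightarrow{w}\mathcal H_0$ as $n,p\to\infty$; completeness means every Cauchy sequence has a point $z$ with $D(z_n,z)\xrightarrow{w}\mathcal H_0$. $Lip^1_\star(G,\Delta^+)$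 is the set of maps $f:G\to\Delta^+$ with $D(x,y)\star f(y)\le f(x)$ for all $x,y$. $\delta_a(y)=D(y,a)$. For maps $f,g:G\to\Delta^+$, $(f\odot g)(x)=\sup_{y,z\in G,\ yz=x}f(y)\star g(z)$; $(Lip^1_\star(G,\Delta^+),\odot)$ is a monoid with identity $\delta_e$. $\Pi(G)$ is the set of $f\in Lip^1_\star(G,\Delta^+)$ for which there is a Cauchy sequence $(a_n)\subset G$ with $D(a_n,x)\xrightarrow{w}f(x)$ for all $x$; $(\Pi(G),\odot)$ is a group. $\mathbb D(f,g)=\sup_{x\in G}f(x)\star g(x)$ for $f,g\in\Pi(G)$. For $f:G\to\Delta^+$ and $F\in\Delta^+$, $\langle f,F\rangle:G\to\Delta^+$ is $\langle f,F\rangle(x)=f(x)\star F$. *)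

theory Defs
  imports "HOL-Algebra.Group" "HOL-Library.Extended_Real"
begin

type_synonym dfun = "ereal \<Rightarrow> real"

definition distribution_function :: "dfun \<Rightarrow> bool" where
  "distribution_function F \<longleftrightarrow>
     mono F \<and> (\<forall>t. 0 \<le> F t \<and> F t \<le> 1) \<and>
     (\<forall>t::real. ((\<lambda>x::real. F (ereal x)) \<longlongrightarrow> F (ereal t)) (at_left t)) \<and>
     F (-\<infinity>) = 0 \<and> F \<infinity> = 1"

definition Delta_plus :: "dfun set" where
  "Delta_plus = {F. distribution_function F \<and> F 0 = 0}"

definition H0 :: dfun where
  "H0 = (\<lambda>t. if t \<le> 0 then 0 else 1)"

definition dsup :: "dfun set \<Rightarrow> dfun" where
  "dsup S = (\<lambda>t. SUP F\<in>S. F t)"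

definition triangle_function :: "(dfun \<Rightarrow> dfun \<Rightarrow> dfun) \<Rightarrow> bool" where
  "triangle_function T \<longleftrightarrow>
     (\<forall>F\<in>Delta_plus. \<forall>L\<in>Delta_plus. T F L \<in> Delta_plus) \<and>
     (\<forall>F\<in>Delta_plus. \<forall>L\<in>Delta_plus. T F L = T L F) \<and>
     (\<forall>F\<in>Delta_plus. \<forall>L\<in>Delta_plus. \<forall>K\<in>Delta_plus. T (T F L) K = T F (T L K)) \<and>
     (\<forall>F\<in>Delta_plus. \<forall>F'\<in>Delta_plus. \<forall>L\<in>Delta_plus. F \<le> F' \<longrightarrow> T F L \<le> T F' L) \<and>
     (\<forall>F\<in>Delta_plus. T F H0 = F)"

definition sup_continuous_tf :: "(dfun \<Rightarrow> dfun \<Rightarrow> dfun) \<Rightarrow> bool" where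
  "sup_continuous_tf T \<longleftrightarrow>
     (\<forall>S L. S \<subseteq> Delta_plus \<and> S \<noteq> {} \<and> L \<in> Delta_plus \<longrightarrow>
        dsup ((\<lambda>F. T F L) ` S) = T (dsup S) L)"

definition wconv :: "('i \<Rightarrow> dfun) \<Rightarrow> dfun \<Rightarrow> 'i filter \<Rightarrow> bool" where
  "wconv Fs F net \<longleftrightarrow>
     (\<forall>t::real. isCont (\<lambda>x::real. F (ereal x)) t \<longrightarrow>
        ((\<lambda>i. Fs i (ereal t)) \<longlongrightarrow> F (ereal t)) net)"

definition continuous_tf :: "(dfun \<Rightarrow> dfun \<Rightarrow> dfun) \<Rightarrow> bool" where
  "continuous_tf T \<longleftrightarrow>
     (\<forall>Fs F Ls L. range Fs \<subseteq> Delta_plus \<and> F \<in> Delta_plus \<and> range Ls \<subseteq> Delta_plus \<and>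
        L \<in> Delta_plus \<and> wconv Fs F sequentially \<and> wconv Ls L sequentially \<longrightarrow>
        wconv (\<lambda>n. T (Fs n) (Ls n)) (T F L) sequentially)"

definition Delta_monoid :: "(dfun \<Rightarrow> dfun \<Rightarrow> dfun) \<Rightarrow> dfun monoid" where
  "Delta_monoid T = \<lparr>carrier = Delta_plus, mult = T, one = H0\<rparr>"

definition pm_space :: "'a set \<Rightarrow> ('a \<Rightarrow> 'a \<Rightarrow> dfun) \<Rightarrow> (dfun \<Rightarrow> dfun \<Rightarrow> dfun) \<Rightarrow> bool" where
  "pm_space X D T \<longleftrightarrow> triangle_function T \<and>
     (\<forall>p\<in>X. \<forall>q\<in>X. D p q \<in> Delta_plus) \<and>
     (\<forall>p\<in>X. \<forall>q\<in>X. D p q = H0 \<longleftrightarrow> p = q) \<and>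
     (\<forall>p\<in>X. \<forall>q\<in>X. D p q = D q p) \<and>
     (\<forall>p\<in>X. \<forall>q\<in>X. \<forall>r\<in>X. T (D p q) (D q r) \<le> D p r)"

definition invariant_pm_group :: "('a, 'b) monoid_scheme \<Rightarrow> ('a \<Rightarrow> 'a \<Rightarrow> dfun) \<Rightarrow> (dfun \<Rightarrow> dfun \<Rightarrow> dfun) \<Rightarrow> bool" where
  "invariant_pm_group G D T \<longleftrightarrow> group G \<and> pm_space (carrier G) D T \<and>
     (\<forall>p\<in>carrier G. \<forall>q\<in>carrier G. \<forall>r\<in>carrier G.
        D (p \<otimes>\<^bsub>G\<^esub> r) (q \<otimes>\<^bsub>G\<^esub> r) = D p q \<and> D (r \<otimes>\<^bsub>G\<^esub> p) (r \<otimes>\<^bsub>G\<^esub> q) = D p q)"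

definition pm_cauchy :: "'a set \<Rightarrow> ('a \<Rightarrow> 'a \<Rightarrow> dfun) \<Rightarrow> (nat \<Rightarrow> 'a) \<Rightarrow> bool" where
  "pm_cauchy X D z \<longleftrightarrow> range z \<subseteq> X \<and>
     wconv (\<lambda>(n, p). D (z n) (z p)) H0 (sequentially \<times>\<^sub>F sequentially)"

definition pm_complete :: "'a set \<Rightarrow> ('a \<Rightarrow> 'a \<Rightarrow> dfun) \<Rightarrow> bool" where
  "pm_complete X D \<longleftrightarrow>
     (\<forall>z. pm_cauchy X D z \<longrightarrow> (\<exists>x\<in>X. wconv (\<lambda>n. D (z n) x) H0 sequentially))"

definition Lip1 :: "('a, 'b) monoid_scheme \<Rightarrow> ('a \<Rightarrow> 'a \<Rightarrow> dfun) \<Rightarrow> (dfun \<Rightarrow> dfun \<Rightarrow> dfun) \<Rightarrow> ('a \<Rightarrow> dfun) set" where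
  "Lip1 G D T = {f \<in> extensional (carrier G). (\<forall>x\<in>carrier G. f x \<in> Delta_plus) \<and>
      (\<forall>x\<in>carrier G. \<forall>y\<in>carrier G. T (D x y) (f y) \<le> f x)}"

definition pdelta :: "('a, 'b) monoid_scheme \<Rightarrow> ('a \<Rightarrow> 'a \<Rightarrow> dfun) \<Rightarrow> 'a \<Rightarrow> ('a \<Rightarrow> dfun)" where
  "pdelta G D a = restrict (\<lambda>y. D y a) (carrier G)"

definition odot :: "('a, 'b) monoid_scheme \<Rightarrow> (dfun \<Rightarrow> dfun \<Rightarrow> dfun) \<Rightarrow> ('a \<Rightarrow> dfun) \<Rightarrow> ('a \<Rightarrow> dfun) \<Rightarrow> ('a \<Rightarrow> dfun)" where
  "odot G T f g = restrict (\<lambda>x. dsup {T (f y) (g z) | y z. y \<in> carrier G \<and> z \<in> carrier G \<and> y \<otimes>\<^bsub>G\<^esub> z = x}) (carrier G)"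

definition Lip_monoid :: "('a, 'b) monoid_scheme \<Rightarrow> ('a \<Rightarrow> 'a \<Rightarrow> dfun) \<Rightarrow> (dfun \<Rightarrow> dfun \<Rightarrow> dfun) \<Rightarrow> ('a \<Rightarrow> dfun) monoid" where
  "Lip_monoid G D T = \<lparr>carrier = Lip1 G D T, mult = odot G T, one = pdelta G D \<one>\<^bsub>G\<^esub>\<rparr>"

definition PiG :: "('a, 'b) monoid_scheme \<Rightarrow> ('a \<Rightarrow> 'a \<Rightarrow> dfun) \<Rightarrow> (dfun \<Rightarrow> dfun \<Rightarrow> dfun) \<Rightarrow> ('a \<Rightarrow> dfun) set" where
  "PiG G D T = {f \<in> Lip1 G D T. \<exists>a. pm_cauchy (carrier G) D a \<and>
      (\<forall>x\<in>carrier G. wconv (\<lambda>n. D (a n) x) (f x) sequentially)}"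

definition Pi_group :: "('a, 'b) monoid_scheme \<Rightarrow> ('a \<Rightarrow> 'a \<Rightarrow> dfun) \<Rightarrow> (dfun \<Rightarrow> dfun \<Rightarrow> dfun) \<Rightarrow> ('a \<Rightarrow> dfun) monoid" where
  "Pi_group G D T = \<lparr>carrier = PiG G D T, mult = odot G T, one = pdelta G D \<one>\<^bsub>G\<^esub>\<rparr>"

definition DD :: "('a, 'b) monoid_scheme \<Rightarrow> (dfun \<Rightarrow> dfun \<Rightarrow> dfun) \<Rightarrow> ('a \<Rightarrow> dfun) \<Rightarrow> ('a \<Rightarrow> dfun) \<Rightarrow> dfun" where
  "DD G T f g = dsup {T (f x) (g x) | x. x \<in> carrier G}"

definition bracket :: "('a, 'b) monoid_scheme \<Rightarrow> (dfun \<Rightarrow> dfun \<Rightarrow> dfun) \<Rightarrow> ('a \<Rightarrow> dfun) \<Rightarrow> dfun \<Rightarrow> ('a \<Rightarrow> dfun)" where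
  "bracket G T f F = restrict (\<lambda>x. T (f x) F) (carrier G)"

end

theory Submission
  imports Defs "HOL-Analysis.Borel_Space" "HOL-Analysis.Continuum_Not_Denumerable"
begin

text \<open>If \<open>\<phi>\<close> is a unit of \<open>Lip\<^sup>1\<close> with inverse \<open>\<psi>\<close>, evaluating \<open>\<phi> \<odot> \<psi> = \<delta>\<^sub>e\<close> at \<open>e\<close>
  shows that \<open>U = sup \<phi>\<close> and \<open>V = sup \<psi>\<close> satisfy \<open>U \<star> V = H0\<close>; so \<open>U\<close> is a unit of \<open>\<Delta>\<^sup>+\<close> and
  \<open>\<phi> = \<langle>f, U\<rangle>\<close> for \<open>f = \<langle>\<phi>, V\<rangle>\<close>, which has the right inverse \<open>\<langle>\<psi>, U\<rangle>\<close>.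
  A right inverse \<open>g\<close> forces \<open>f \<in> \<Pi>(G)\<close>: as \<open>(f \<odot> g)(e) = H0\<close> is a supremum, there are \<open>y\<^sub>n\<close>
  with \<open>f(y\<^sub>n)\<close> and \<open>g(y\<^sub>n\<inverse>)\<close> above step functions \<open>\<epsilon>\<^sub>n \<rightarrow> H0\<close>, and \<open>f(y) \<star> g(w\<inverse>) \<le> D(y, w)\<close>
  makes \<open>(y\<^sub>n)\<close> Cauchy with \<open>D(y\<^sub>n, x) \<rightarrow> f(x)\<close>.
  Conversely \<open>f \<in> \<Pi>(G)\<close> is inverted by \<open>x \<mapsto> f(x\<inverse>)\<close>: continuity of \<open>\<star>\<close> lets the triangle
  inequality pass to the limit along the Cauchy sequence defining \<open>f\<close>, while sup-continuity makes
  \<open>\<odot>\<close> associative and compatible with \<open>\<langle>\<cdot>, \<cdot>\<rangle>\<close>. If \<open>G\<close> is complete, that Cauchy sequence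
  converges to some \<open>a\<close> and \<open>f = \<delta>\<^sub>a\<close>.\<close>

lemma m_inv_eq_in_submonoid:
  assumes M: "monoid M" and N: "carrier N \<subseteq> carrier M"
    "\<And>a b. a \<otimes>\<^bsub>N\<^esub> b = a \<otimes>\<^bsub>M\<^esub> b" "\<one>\<^bsub>N\<^esub> = \<one>\<^bsub>M\<^esub>"
    and xy: "x \<in> carrier N" "y \<in> carrier N" "x \<otimes>\<^bsub>M\<^esub> y = \<one>\<^bsub>M\<^esub>" "y \<otimes>\<^bsub>M\<^esub> x = \<one>\<^bsub>M\<^esub>"
  shows "inv\<^bsub>N\<^esub> x = y"
  unfolding m_inv_def
proof (rule the_equality)
  fix z assume "z \<in> carrier N \<and> x \<otimes>\<^bsub>N\<^esub> z = \<one>\<^bsub>N\<^esub> \<and> z \<otimes>\<^bsub>N\<^esub> x = \<one>\<^bsub>N\<^esub>"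
  then show "z = y"
    using monoid.inv_unique'[OF M, of x z] monoid.inv_unique'[OF M, of x y] N xy by auto
qed (use N xy in auto)

section \<open>Distribution functions\<close>

lemma Delta_plusD:
  assumes "F \<in> Delta_plus"
  shows "mono F" "\<And>t. 0 \<le> F t" "\<And>t. F t \<le> 1" "F (-\<infinity>) = 0" "F \<infinity> = 1" "F 0 = 0"
    "\<And>t::real. ((\<lambda>x::real. F (ereal x)) \<longlongrightarrow> F (ereal t)) (at_left t)"
  using assms unfolding Delta_plus_def distribution_function_def by auto

lemma Delta_plus_monoD: "F \<in> Delta_plus \<Longrightarrow> s \<le> t \<Longrightarrow> F s \<le> F t"
  using Delta_plusD(1) by (auto dest: monoD)

lemma mono_Delta_plus_real: "F \<in> Delta_plus \<Longrightarrow> mono (\<lambda>x::real. F (ereal x))"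
  by (auto simp: mono_def intro: Delta_plus_monoD)

lemma Delta_plus_nonpos: assumes "F \<in> Delta_plus" "t \<le> 0" shows "F t = 0"
  using Delta_plus_monoD[OF assms] Delta_plusD(2,6)[OF assms(1)] by (simp add: order_antisym)

lemma H0_in_Delta_plus: "H0 \<in> Delta_plus"
proof -
  have "eventually (\<lambda>x. H0 (ereal x) = H0 (ereal t)) (at_left t)" for t :: real
    unfolding eventually_at_left_field
    by (intro exI[of _ "if t \<le> 0 then t - 1 else 0"]) (auto simp: H0_def)
  then have "((\<lambda>x::real. H0 (ereal x)) \<longlongrightarrow> H0 (ereal t)) (at_left t)" for t :: real
    by (rule tendsto_eventually)
  moreover have "mono H0" unfolding mono_def H0_def by auto
  ultimately show ?thesis unfolding Delta_plus_def distribution_function_def by (auto simp: H0_def)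
qed

lemma Delta_plus_le_H0: "F \<in> Delta_plus \<Longrightarrow> F \<le> H0"
  using Delta_plus_nonpos[of F] Delta_plusD(3)[of F] by (auto simp: H0_def le_fun_def)

lemma Delta_plus_le_realI:
  assumes "F \<in> Delta_plus" "L \<in> Delta_plus" "\<And>s::real. F (ereal s) \<le> L (ereal s)"
  shows "F \<le> L"
proof (rule le_funI)
  fix x show "F x \<le> L x"
    using assms Delta_plusD(4,5)[OF assms(1)] Delta_plusD(4,5)[OF assms(2)] by (cases x) auto
qed

lemma isCont_H0: "t > 0 \<Longrightarrow> isCont (\<lambda>x. H0 (ereal x)) t"
  unfolding isCont_def
  by (rule tendsto_eventually, unfold eventually_at) (auto intro!: exI[of _ t] simp: H0_def dist_real_def)

lemma bdd_above_Delta_plus_values: "S \<subseteq> Delta_plus \<Longrightarrow> bdd_above ((\<lambda>F. F t) ` S)"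
  using Delta_plusD(3) by (auto intro!: bdd_aboveI[of _ 1])

lemma dsup_upper: "S \<subseteq> Delta_plus \<Longrightarrow> F \<in> S \<Longrightarrow> F \<le> dsup S"
  unfolding dsup_def by (auto intro!: le_funI cSUP_upper bdd_above_Delta_plus_values)

lemma dsup_least: "S \<noteq> {} \<Longrightarrow> (\<And>F. F \<in> S \<Longrightarrow> F \<le> L) \<Longrightarrow> dsup S \<le> L"
  unfolding dsup_def by (auto intro!: le_funI cSUP_least dest: le_funD)

lemma less_dsupD:
  assumes "S \<subseteq> Delta_plus" "S \<noteq> {}" "a < dsup S t"
  shows "\<exists>F\<in>S. a < F t"
  using assms less_cSUP_iff[OF assms(2) bdd_above_Delta_plus_values[OF assms(1)]]
  by (simp add: dsup_def)

lemma dsup_in_Delta_plus: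
  assumes S: "S \<subseteq> Delta_plus" "S \<noteq> {}"
  shows "dsup S \<in> Delta_plus"
proof -
  let ?s = "dsup S"
  have upper: "F t \<le> ?s t" if "F \<in> S" for F t
    using dsup_upper[OF S(1) that] by (auto dest: le_funD)
  have below: "?s t \<le> c" if "\<And>F. F \<in> S \<Longrightarrow> F t \<le> c" for t c
    unfolding dsup_def using that by (rule cSUP_least[OF S(2)])
  obtain F0 where F0: "F0 \<in> S" using S(2) by auto
  have mono: "mono ?s"
    by (rule monoI, rule below) (use S Delta_plus_monoD upper in \<open>blast intro: order_trans\<close>)
  have "0 \<le> ?s t" for t using upper[OF F0, of t] Delta_plusD(2)[of F0 t] F0 S(1) by force
  moreover have "?s t \<le> 1" for t by (rule below) (use S(1) Delta_plusD(3) in blast)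
  moreover have "?s (-\<infinity>) \<le> 0" "?s 0 \<le> 0" by (rule below, use S(1) Delta_plusD(4,6) in force)+
  moreover have "1 \<le> ?s \<infinity>" using upper[OF F0, of "\<infinity>"] Delta_plusD(5)[of F0] F0 S(1) by force
  moreover have "((\<lambda>x::real. ?s (ereal x)) \<longlongrightarrow> ?s (ereal t)) (at_left t)" for t :: real
  proof (rule order_tendstoI)
    fix a assume "a < ?s (ereal t)"
    then obtain F where F: "F \<in> S" "a < F (ereal t)" using less_dsupD[OF S] by blast
    have "eventually (\<lambda>x. a < F (ereal x)) (at_left t)"
      using order_tendstoD(1)[OF Delta_plusD(7)[of F t] F(2)] F(1) S(1) by auto
    then show "eventually (\<lambda>x. a < ?s (ereal x)) (at_left t)"
      by eventually_elim (rule less_le_trans[OF _ upper[OF F(1)]])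
  next
    fix a assume a: "?s (ereal t) < a"
    have "?s (ereal y) < a" if "y < t" for y
      using monoD[OF mono, of "ereal y" "ereal t"] that a by simp
    then show "eventually (\<lambda>x. ?s (ereal x) < a) (at_left t)"
      unfolding eventually_at_left_field by (intro exI[of _ "t - 1"]) auto
  qed
  ultimately show ?thesis unfolding Delta_plus_def distribution_function_def
    using mono by (auto intro: order_antisym)
qed

lemma wconvD:
  "wconv Fs F net \<Longrightarrow> isCont (\<lambda>x. F (ereal x)) t \<Longrightarrow> ((\<lambda>i. Fs i (ereal t)) \<longlongrightarrow> F (ereal t)) net"
  unfolding wconv_def by auto

lemma wconv_const: "wconv (\<lambda>i. F) F net"
  unfolding wconv_def by auto

lemma ex_common_continuity_point:
  fixes f g :: "real \<Rightarrow> real"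
  assumes "mono f" "mono g" "b < s"
  shows "\<exists>x. b < x \<and> x < s \<and> isCont f x \<and> isCont g x"
proof -
  have "countable ({a. \<not> isCont f a} \<union> {a. \<not> isCont g a})"
    using mono_ctble_discont[OF assms(1)] mono_ctble_discont[OF assms(2)] by auto
  from open_minus_countable[OF this, of "{b<..<s}"] assms(3) show ?thesis by auto
qed

text \<open>Limits are compared at common continuity points, which are dense, and the left-continuity
  of the limits recovers the comparison everywhere.\<close>
lemma wconv_le:
  assumes F: "F \<in> Delta_plus" and L: "L \<in> Delta_plus"
    and "wconv Fs F net" "wconv Ls L net" "net \<noteq> bot"
    and le: "\<And>s::real. eventually (\<lambda>i. Fs i (ereal s) \<le> Ls i (ereal s)) net"
  shows "F \<le> L"
proof (rule Delta_plus_le_realI[OF F L], rule ccontr)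
  fix s :: real
  assume "\<not> F (ereal s) \<le> L (ereal s)"
  then have "L (ereal s) < F (ereal s)" by simp
  from order_tendstoD(1)[OF Delta_plusD(7)[OF F, of s] this]
  obtain b where b: "b < s" "\<And>y. b < y \<Longrightarrow> y < s \<Longrightarrow> L (ereal s) < F (ereal y)"
    unfolding eventually_at_left_field by blast
  obtain x where x: "b < x" "x < s" "isCont (\<lambda>x. F (ereal x)) x" "isCont (\<lambda>x. L (ereal x)) x"
    using ex_common_continuity_point[OF mono_Delta_plus_real[OF F] mono_Delta_plus_real[OF L] b(1)]
    by blast
  have "F (ereal x) \<le> L (ereal x)"
    using tendsto_le[OF \<open>net \<noteq> bot\<close> wconvD[OF assms(4) x(4)] wconvD[OF assms(3) x(3)] le] .
  also have "\<dots> \<le> L (ereal s)" using Delta_plus_monoD[OF L] x(2) by simp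
  finally show False using b(2)[OF x(1,2)] by simp
qed

lemma wconv_H0I:
  assumes "\<And>i. Fs i \<in> Delta_plus"
    and "\<And>t e. t > 0 \<Longrightarrow> e > 0 \<Longrightarrow> eventually (\<lambda>i. 1 - e < Fs i (ereal t)) net"
  shows "wconv Fs H0 net"
  unfolding wconv_def
proof (intro allI impI)
  fix t :: real
  show "((\<lambda>i. Fs i (ereal t)) \<longlongrightarrow> H0 (ereal t)) net"
  proof (cases "t \<le> 0")
    case True
    then show ?thesis using Delta_plus_nonpos[OF assms(1)] by (simp add: H0_def)
  next
    case False
    show ?thesis
    proof (rule order_tendstoI)
      fix a assume "a < H0 (ereal t)"
      then show "eventually (\<lambda>i. a < Fs i (ereal t)) net"
        using assms(2)[of t "1 - a"] False by (simp add: H0_def)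
    next
      fix a assume "H0 (ereal t) < a"
      then show "eventually (\<lambda>i. Fs i (ereal t) < a) net"
        using False Delta_plusD(3)[OF assms(1)] by (intro always_eventually) (auto simp: H0_def intro: le_less_trans)
    qed
  qed
qed

definition step_dfun :: "real \<Rightarrow> real \<Rightarrow> dfun" where
  "step_dfun c a = (\<lambda>s. if s \<le> ereal c then 0 else if s = \<infinity> then 1 else a)"

lemma step_dfun_in_Delta_plus:
  assumes "0 \<le> c" "0 \<le> a" "a \<le> 1"
  shows "step_dfun c a \<in> Delta_plus"
proof -
  have "mono (step_dfun c a)"
    by (rule monoI) (use assms in \<open>auto simp: step_dfun_def intro: order_trans\<close>)
  moreover have "eventually (\<lambda>x. step_dfun c a (ereal x) = step_dfun c a (ereal t)) (at_left t)" for t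
    unfolding eventually_at_left_field
    by (intro exI[of _ "if t \<le> c then t - 1 else c"]) (auto simp: step_dfun_def)
  then have "((\<lambda>x::real. step_dfun c a (ereal x)) \<longlongrightarrow> step_dfun c a (ereal t)) (at_left t)" for t
    by (rule tendsto_eventually)
  ultimately show ?thesis
    using assms unfolding Delta_plus_def distribution_function_def by (auto simp: step_dfun_def)
qed

lemma step_dfun_le: assumes "F \<in> Delta_plus" "a \<le> F (ereal c)" shows "step_dfun c a \<le> F"
proof (rule le_funI)
  fix s
  have "F (ereal c) \<le> F s" if "\<not> s \<le> ereal c" using that Delta_plus_monoD[OF assms(1)] by simp
  then show "step_dfun c a s \<le> F s"
    using Delta_plusD(2,5)[OF assms(1)] assms(2) by (auto simp: step_dfun_def)
qed

lemma step_dfun_leD: "step_dfun c a \<le> F \<Longrightarrow> c < s \<Longrightarrow> a \<le> F (ereal s)"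
  using le_funD[of "step_dfun c a" F "ereal s"] by (simp add: step_dfun_def)

definition H0_approx :: "nat \<Rightarrow> dfun" where
  "H0_approx n = step_dfun (1 / (real n + 1)) (1 - 1 / (real n + 1))"

lemma H0_approx_in_Delta_plus: "H0_approx n \<in> Delta_plus"
  unfolding H0_approx_def by (rule step_dfun_in_Delta_plus) (auto simp: field_simps)

lemma H0_approx_mono: assumes "n \<le> m" shows "H0_approx n \<le> H0_approx m"
proof (rule le_funI)
  fix s
  have "1 / (real m + 1) \<le> 1 / (real n + 1)" using assms by (simp add: frac_le)
  then show "H0_approx n s \<le> H0_approx m s"
    unfolding H0_approx_def step_dfun_def by (auto intro: order_trans)
qed

lemma wconv_H0_approx: "wconv H0_approx H0 sequentially"
proof (rule wconv_H0I[OF H0_approx_in_Delta_plus])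
  fix t e :: real assume "t > 0" "e > 0"
  then obtain N where N: "inverse (real (Suc N)) < min t e" using reals_Archimedean[of "min t e"] by auto
  have "1 - e < H0_approx n (ereal t)" if "N \<le> n" for n
  proof -
    have "1 / (real n + 1) \<le> inverse (real (Suc N))" using that by (simp add: frac_le inverse_eq_divide)
    then show ?thesis using N unfolding H0_approx_def step_dfun_def by auto
  qed
  then show "eventually (\<lambda>n. 1 - e < H0_approx n (ereal t)) sequentially"
    unfolding eventually_sequentially by blast
qed

section \<open>Triangle functions\<close>

locale triangle_fun =
  fixes T :: "dfun \<Rightarrow> dfun \<Rightarrow> dfun"
  assumes triangle_function: "triangle_function T"
begin

lemma T_closed: "F \<in> Delta_plus \<Longrightarrow> L \<in> Delta_plus \<Longrightarrow> T F L \<in> Delta_plus"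
  and T_commute: "F \<in> Delta_plus \<Longrightarrow> L \<in> Delta_plus \<Longrightarrow> T F L = T L F"
  and T_assoc: "F \<in> Delta_plus \<Longrightarrow> L \<in> Delta_plus \<Longrightarrow> K \<in> Delta_plus \<Longrightarrow> T (T F L) K = T F (T L K)"
  and T_mono_left: "F \<in> Delta_plus \<Longrightarrow> F' \<in> Delta_plus \<Longrightarrow> L \<in> Delta_plus \<Longrightarrow> F \<le> F' \<Longrightarrow> T F L \<le> T F' L"
  and T_H0_right: "F \<in> Delta_plus \<Longrightarrow> T F H0 = F"
  using triangle_function unfolding triangle_function_def by auto

lemma T_mono_right: "F \<in> Delta_plus \<Longrightarrow> L \<in> Delta_plus \<Longrightarrow> L' \<in> Delta_plus \<Longrightarrow> L \<le> L' \<Longrightarrow> T F L \<le> T F L'"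
  using T_mono_left[of L L' F] T_commute by simp

lemma T_mono:
  "\<lbrakk>F \<in> Delta_plus; F' \<in> Delta_plus; L \<in> Delta_plus; L' \<in> Delta_plus; F \<le> F'; L \<le> L'\<rbrakk> \<Longrightarrow> T F L \<le> T F' L'"
  using order_trans[OF T_mono_left[of F F' L] T_mono_right[of F' L L']] by blast

lemma T_H0_left: "F \<in> Delta_plus \<Longrightarrow> T H0 F = F"
  using T_commute[OF H0_in_Delta_plus] T_H0_right by simp

lemma T_le_left: "F \<in> Delta_plus \<Longrightarrow> L \<in> Delta_plus \<Longrightarrow> T F L \<le> F"
  using T_mono_right[OF _ _ H0_in_Delta_plus Delta_plus_le_H0] T_H0_right by simp

lemma T_le_right: "F \<in> Delta_plus \<Longrightarrow> L \<in> Delta_plus \<Longrightarrow> T F L \<le> L"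
  using T_le_left[of L F] T_commute by simp

lemma T_interchange:
  "\<lbrakk>F \<in> Delta_plus; L \<in> Delta_plus; K \<in> Delta_plus; M \<in> Delta_plus\<rbrakk> \<Longrightarrow> T (T F L) (T K M) = T (T F K) (T L M)"
  by (simp add: T_assoc T_closed T_commute[of L] flip: T_assoc[of L K])

lemma monoid_Delta_monoid: "monoid (Delta_monoid T)"
  unfolding Delta_monoid_def
  by (rule monoidI) (auto simp: T_closed T_assoc T_H0_left T_H0_right H0_in_Delta_plus)

lemma Units_Delta_monoid: "Units (Delta_monoid T) = {U \<in> Delta_plus. \<exists>V \<in> Delta_plus. T U V = H0}"
  unfolding Units_def Delta_monoid_def using T_commute by auto

lemma inv_Delta_monoid_eq:
  assumes "U \<in> Delta_plus" "V \<in> Delta_plus" "T U V = H0"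
  shows "inv\<^bsub>Delta_monoid T\<^esub> U = V"
  using monoid.inv_unique'[OF monoid_Delta_monoid, of U V] assms T_commute
  by (simp add: Delta_monoid_def)

end

locale continuous_triangle_fun = triangle_fun +
  assumes continuous: "continuous_tf T"
begin

lemma wconv_T:
  assumes "\<And>n. Fs n \<in> Delta_plus" "F \<in> Delta_plus" "\<And>n. Ls n \<in> Delta_plus" "L \<in> Delta_plus"
    "wconv Fs F sequentially" "wconv Ls L sequentially"
  shows "wconv (\<lambda>n. T (Fs n) (Ls n)) (T F L) sequentially"
  using continuous assms unfolding continuous_tf_def by blast

lemma le_if_T_le_along_H0:
  assumes S: "S \<in> Delta_plus" and F: "F \<in> Delta_plus"
    and E: "\<And>n. E n \<in> Delta_plus" "wconv E H0 sequentially"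
    and le: "\<And>n. T S (E n) \<le> F"
  shows "S \<le> F"
proof -
  have "wconv (\<lambda>n. T S (E n)) S sequentially"
    using wconv_T[OF S S E(1) H0_in_Delta_plus wconv_const E(2)] T_H0_right[OF S] by simp
  then show ?thesis
    by (rule wconv_le[OF S F _ wconv_const]) (auto intro!: always_eventually le_funD[OF le])
qed

text \<open>If \<open>Fs n t \<ge> a\<close> infinitely often, the step function jumping to \<open>a\<close> at \<open>t\<close> lies below \<open>F\<close>
  by the previous lemma, contradicting \<open>F < a\<close> just right of the continuity point \<open>t\<close>.\<close>
lemma eventually_less_at_continuity_point:
  assumes F: "F \<in> Delta_plus" and Fs: "\<And>n. Fs n \<in> Delta_plus"
    and E: "\<And>n. E n \<in> Delta_plus" "\<And>n m. n \<le> m \<Longrightarrow> E n \<le> E m" "wconv E H0 sequentially"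
    and upper: "\<And>n. T (Fs n) (E n) \<le> F"
    and ct: "isCont (\<lambda>x. F (ereal x)) t" and a: "F (ereal t) < a"
  shows "eventually (\<lambda>n. Fs n (ereal t) < a) sequentially"
proof (cases "t \<le> 0 \<or> 1 < a")
  case True
  then have "Fs n (ereal t) < a" for n
    using Delta_plus_nonpos[OF Fs, of "ereal t"] Delta_plus_nonpos[OF F, of "ereal t"] a
      Delta_plusD(3)[OF Fs, of n "ereal t"] by (cases "t \<le> 0") auto
  then show ?thesis by simp
next
  case False
  let ?S = "step_dfun t a"
  have S: "?S \<in> Delta_plus"
    using step_dfun_in_Delta_plus False Delta_plusD(2)[OF F, of "ereal t"] a by simp
  show ?thesis
  proof (rule ccontr)
    assume not_eventually: "\<not> eventually (\<lambda>n. Fs n (ereal t) < a) sequentially"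
    have "T ?S (E N) \<le> F" for N
    proof -
      obtain n where n: "N \<le> n" "a \<le> Fs n (ereal t)"
        using not_eventually unfolding eventually_sequentially not_less[symmetric] by blast
      have "T ?S (E N) \<le> T (Fs n) (E n)"
        using T_mono[OF S Fs E(1) E(1) step_dfun_le[OF Fs n(2)] E(2)[OF n(1)]] .
      also have "\<dots> \<le> F" by (rule upper)
      finally show ?thesis .
    qed
    then have "?S \<le> F" using le_if_T_le_along_H0[OF S F E(1,3)] by blast
    have "eventually (\<lambda>x. F (ereal x) < a) (at t)"
      using order_tendstoD(2)[OF ct[unfolded isCont_def] a] .
    then obtain d where d: "d > 0" "\<And>x. x \<noteq> t \<Longrightarrow> dist x t < d \<Longrightarrow> F (ereal x) < a"
      unfolding eventually_at by blast
    have "F (ereal (t + d/2)) < a" using d by (auto simp: dist_real_def)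
    moreover have "a \<le> F (ereal (t + d/2))" using step_dfun_leD[OF \<open>?S \<le> F\<close>] d by simp
    ultimately show False by simp
  qed
qed

lemma wconv_squeeze:
  assumes F: "F \<in> Delta_plus" and Fs: "\<And>n. Fs n \<in> Delta_plus"
    and E: "\<And>n. E n \<in> Delta_plus" "\<And>n m. n \<le> m \<Longrightarrow> E n \<le> E m" "wconv E H0 sequentially"
    and lower: "wconv Ls F sequentially" "\<And>n. Ls n \<le> Fs n"
    and upper: "\<And>n. T (Fs n) (E n) \<le> F"
  shows "wconv Fs F sequentially"
  unfolding wconv_def
proof (intro allI impI)
  fix t :: real assume ct: "isCont (\<lambda>x. F (ereal x)) t"
  show "((\<lambda>n. Fs n (ereal t)) \<longlongrightarrow> F (ereal t)) sequentially"
  proof (rule order_tendstoI)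
    fix a assume "a < F (ereal t)"
    from order_tendstoD(1)[OF wconvD[OF lower(1) ct] this]
    show "eventually (\<lambda>n. a < Fs n (ereal t)) sequentially"
      by eventually_elim (use lower(2) in \<open>auto dest: le_funD[of _ _ "ereal t"] intro: less_le_trans\<close>)
  qed (rule eventually_less_at_continuity_point[OF F Fs E upper ct])
qed

end

locale pm_group =
  fixes T :: "dfun \<Rightarrow> dfun \<Rightarrow> dfun" and G :: "('a, 'b) monoid_scheme" and D :: "'a \<Rightarrow> 'a \<Rightarrow> dfun"
  assumes invariant_pm_group: "invariant_pm_group G D T"

sublocale pm_group \<subseteq> triangle_fun T
  using invariant_pm_group by unfold_locales (simp add: invariant_pm_group_def pm_space_def)

sublocale pm_group \<subseteq> G: group G
  using invariant_pm_group by (simp add: invariant_pm_group_def)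

context pm_group
begin

lemma D_closed: "p \<in> carrier G \<Longrightarrow> q \<in> carrier G \<Longrightarrow> D p q \<in> Delta_plus"
  and D_eq_H0_iff: "p \<in> carrier G \<Longrightarrow> q \<in> carrier G \<Longrightarrow> D p q = H0 \<longleftrightarrow> p = q"
  and D_commute: "p \<in> carrier G \<Longrightarrow> q \<in> carrier G \<Longrightarrow> D p q = D q p"
  and D_triangle: "p \<in> carrier G \<Longrightarrow> q \<in> carrier G \<Longrightarrow> r \<in> carrier G \<Longrightarrow> T (D p q) (D q r) \<le> D p r"
  and D_mult_right:
    "p \<in> carrier G \<Longrightarrow> q \<in> carrier G \<Longrightarrow> r \<in> carrier G \<Longrightarrow> D (p \<otimes>\<^bsub>G\<^esub> r) (q \<otimes>\<^bsub>G\<^esub> r) = D p q"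
  and D_mult_left:
    "p \<in> carrier G \<Longrightarrow> q \<in> carrier G \<Longrightarrow> r \<in> carrier G \<Longrightarrow> D (r \<otimes>\<^bsub>G\<^esub> p) (r \<otimes>\<^bsub>G\<^esub> q) = D p q"
  using invariant_pm_group unfolding invariant_pm_group_def pm_space_def by auto

lemma D_self: "p \<in> carrier G \<Longrightarrow> D p p = H0"
  using D_eq_H0_iff by simp

lemma D_div_one: "p \<in> carrier G \<Longrightarrow> q \<in> carrier G \<Longrightarrow> D (p \<otimes>\<^bsub>G\<^esub> inv\<^bsub>G\<^esub> q) \<one>\<^bsub>G\<^esub> = D p q"
  using D_mult_right[of "p \<otimes>\<^bsub>G\<^esub> inv\<^bsub>G\<^esub> q" "\<one>\<^bsub>G\<^esub>" q] by (simp add: G.m_assoc)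

lemma D_inv: assumes "p \<in> carrier G" "q \<in> carrier G" shows "D (inv\<^bsub>G\<^esub> p) (inv\<^bsub>G\<^esub> q) = D p q"
proof -
  have "D (inv\<^bsub>G\<^esub> p) (inv\<^bsub>G\<^esub> q) = D \<one>\<^bsub>G\<^esub> (p \<otimes>\<^bsub>G\<^esub> inv\<^bsub>G\<^esub> q)"
    using D_mult_left[of "inv\<^bsub>G\<^esub> p" "inv\<^bsub>G\<^esub> q" p] assms by (simp add: G.m_assoc[symmetric])
  also have "\<dots> = D q p" using D_div_one[of p q] D_commute assms by simp
  finally show ?thesis using D_commute assms by simp
qed

definition odot_terms :: "('a \<Rightarrow> dfun) \<Rightarrow> ('a \<Rightarrow> dfun) \<Rightarrow> 'a \<Rightarrow> dfun set" where
  "odot_terms f g x = {T (f y) (g z) | y z. y \<in> carrier G \<and> z \<in> carrier G \<and> y \<otimes>\<^bsub>G\<^esub> z = x}"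

lemma odot_apply: "x \<in> carrier G \<Longrightarrow> odot G T f g x = dsup (odot_terms f g x)"
  unfolding odot_def odot_terms_def by simp

lemma odot_extensional: "odot G T f g \<in> extensional (carrier G)"
  unfolding odot_def by simp

lemma odot_terms_subset:
  "f \<in> carrier G \<rightarrow> Delta_plus \<Longrightarrow> g \<in> carrier G \<rightarrow> Delta_plus \<Longrightarrow> odot_terms f g x \<subseteq> Delta_plus"
  unfolding odot_terms_def using T_closed by blast

lemma odot_terms_nonempty: "x \<in> carrier G \<Longrightarrow> odot_terms f g x \<noteq> {}"
  unfolding odot_terms_def using G.r_one by blast

lemma odot_in_Delta_plus:
  "f \<in> carrier G \<rightarrow> Delta_plus \<Longrightarrow> g \<in> carrier G \<rightarrow> Delta_plus \<Longrightarrow> x \<in> carrier G \<Longrightarrow> odot G T f g x \<in> Delta_plus"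
  using odot_apply dsup_in_Delta_plus odot_terms_subset odot_terms_nonempty by simp

lemma odot_funcset:
  "f \<in> carrier G \<rightarrow> Delta_plus \<Longrightarrow> g \<in> carrier G \<rightarrow> Delta_plus \<Longrightarrow> odot G T f g \<in> carrier G \<rightarrow> Delta_plus"
  using odot_in_Delta_plus by blast

lemma odot_ge:
  assumes "f \<in> carrier G \<rightarrow> Delta_plus" "g \<in> carrier G \<rightarrow> Delta_plus" "y \<in> carrier G" "z \<in> carrier G"
  shows "T (f y) (g z) \<le> odot G T f g (y \<otimes>\<^bsub>G\<^esub> z)"
  using dsup_upper[OF odot_terms_subset[OF assms(1,2)]] assms(3,4)
  by (auto simp: odot_apply odot_terms_def)

lemma odot_le:
  assumes "x \<in> carrier G"
    and "\<And>y z. y \<in> carrier G \<Longrightarrow> z \<in> carrier G \<Longrightarrow> y \<otimes>\<^bsub>G\<^esub> z = x \<Longrightarrow> T (f y) (g z) \<le> L"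
  shows "odot G T f g x \<le> L"
  unfolding odot_apply[OF assms(1)]
  by (rule dsup_least[OF odot_terms_nonempty[OF assms(1)]]) (auto simp: odot_terms_def intro: assms(2))

lemma less_odotD:
  assumes "f \<in> carrier G \<rightarrow> Delta_plus" "g \<in> carrier G \<rightarrow> Delta_plus" "x \<in> carrier G"
    and "a < odot G T f g x t"
  shows "\<exists>y\<in>carrier G. \<exists>z\<in>carrier G. y \<otimes>\<^bsub>G\<^esub> z = x \<and> a < T (f y) (g z) t"
proof -
  obtain F where "F \<in> odot_terms f g x" "a < F t"
    using less_dsupD[OF odot_terms_subset[OF assms(1,2)] odot_terms_nonempty[OF assms(3)]] assms(4)
    by (auto simp: odot_apply[OF assms(3)])
  then show ?thesis unfolding odot_terms_def by blast
qed

lemma Lip1D: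
  assumes "f \<in> Lip1 G D T"
  shows "f \<in> extensional (carrier G)" "f \<in> carrier G \<rightarrow> Delta_plus"
    "\<And>x y. x \<in> carrier G \<Longrightarrow> y \<in> carrier G \<Longrightarrow> T (D x y) (f y) \<le> f x"
  using assms unfolding Lip1_def by auto

lemma Lip1_in_Delta_plus: "f \<in> Lip1 G D T \<Longrightarrow> x \<in> carrier G \<Longrightarrow> f x \<in> Delta_plus"
  using Lip1D(2) by blast

lemma Lip1I:
  assumes "f \<in> extensional (carrier G)" "f \<in> carrier G \<rightarrow> Delta_plus"
    "\<And>x y. x \<in> carrier G \<Longrightarrow> y \<in> carrier G \<Longrightarrow> T (D x y) (f y) \<le> f x"
  shows "f \<in> Lip1 G D T"
  using assms unfolding Lip1_def by auto

lemma pdelta_apply: "y \<in> carrier G \<Longrightarrow> pdelta G D a y = D y a"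
  unfolding pdelta_def by simp

lemma pdelta_in_Lip1: "a \<in> carrier G \<Longrightarrow> pdelta G D a \<in> Lip1 G D T"
  by (rule Lip1I) (auto simp: pdelta_def D_closed D_triangle)

lemma pdelta_funcset: "a \<in> carrier G \<Longrightarrow> pdelta G D a \<in> carrier G \<rightarrow> Delta_plus"
  using Lip1D(2)[OF pdelta_in_Lip1] .

lemma inj_on_pdelta: "inj_on (pdelta G D) (carrier G)"
proof (rule inj_onI)
  fix a b assume ab: "a \<in> carrier G" "b \<in> carrier G" "pdelta G D a = pdelta G D b"
  then have "D a b = D a a" using pdelta_apply[of a a] pdelta_apply[of a b] by simp
  then show "a = b" using D_eq_H0_iff D_self ab by simp
qed

lemma DD_pdelta:
  assumes a: "a \<in> carrier G" and b: "b \<in> carrier G"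
  shows "DD G T (pdelta G D a) (pdelta G D b) = D a b"
  unfolding DD_def
proof (rule order_antisym)
  let ?S = "{T (pdelta G D a x) (pdelta G D b x) |x. x \<in> carrier G}"
  show "dsup ?S \<le> D a b"
    by (rule dsup_least) (use D_triangle[OF a _ b] D_commute[OF a] in \<open>auto simp: pdelta_apply\<close>)
  have "T (pdelta G D a a) (pdelta G D b a) = D a b"
    using a b by (simp add: pdelta_apply D_self T_H0_left D_closed)
  moreover have "?S \<subseteq> Delta_plus" using a b by (auto simp: pdelta_apply D_closed T_closed)
  ultimately show "D a b \<le> dsup ?S" using dsup_upper[of ?S] a by force
qed

lemma pdelta_mult:
  assumes a: "a \<in> carrier G" and b: "b \<in> carrier G"
  shows "pdelta G D (a \<otimes>\<^bsub>G\<^esub> b) = odot G T (pdelta G D a) (pdelta G D b)"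
proof (rule extensionalityI[OF _ odot_extensional])
  show "pdelta G D (a \<otimes>\<^bsub>G\<^esub> b) \<in> extensional (carrier G)" unfolding pdelta_def by simp
  fix x assume x: "x \<in> carrier G"
  show "pdelta G D (a \<otimes>\<^bsub>G\<^esub> b) x = odot G T (pdelta G D a) (pdelta G D b) x"
  proof (rule order_antisym)
    let ?y = "inv\<^bsub>G\<^esub> a \<otimes>\<^bsub>G\<^esub> x"
    have y: "?y \<in> carrier G" "a \<otimes>\<^bsub>G\<^esub> ?y = x" using a x by (simp_all add: G.m_assoc[symmetric])
    have "D x (a \<otimes>\<^bsub>G\<^esub> b) = T (pdelta G D a a) (pdelta G D b ?y)"
      using D_mult_left[OF y(1) b a] y a b by (simp add: pdelta_apply D_self T_H0_left D_closed)
    also have "\<dots> \<le> odot G T (pdelta G D a) (pdelta G D b) x"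
      using odot_ge[OF pdelta_funcset[OF a] pdelta_funcset[OF b] a y(1)] y(2) by simp
    finally show "pdelta G D (a \<otimes>\<^bsub>G\<^esub> b) x \<le> odot G T (pdelta G D a) (pdelta G D b) x"
      using pdelta_apply x by simp
  next
    show "odot G T (pdelta G D a) (pdelta G D b) x \<le> pdelta G D (a \<otimes>\<^bsub>G\<^esub> b) x"
    proof (rule odot_le[OF x])
      fix y z assume yz: "y \<in> carrier G" "z \<in> carrier G" "y \<otimes>\<^bsub>G\<^esub> z = x"
      have "T (D y a) (D z b) = T (D x (a \<otimes>\<^bsub>G\<^esub> z)) (D (a \<otimes>\<^bsub>G\<^esub> z) (a \<otimes>\<^bsub>G\<^esub> b))"
        using D_mult_right[of y a z] D_mult_left[of z b a] yz a b by simp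
      also have "\<dots> \<le> D x (a \<otimes>\<^bsub>G\<^esub> b)" using D_triangle x yz a b by simp
      finally show "T (pdelta G D a y) (pdelta G D b z) \<le> pdelta G D (a \<otimes>\<^bsub>G\<^esub> b) x"
        using pdelta_apply x yz by simp
    qed
  qed
qed

text \<open>Both unit laws: by invariance \<open>D z \<one> = D (y z) y\<close>, so the terms of \<open>f \<odot> \<delta>\<^sub>e\<close> at \<open>x\<close>
  are bounded by \<open>f x\<close> via the Lipschitz condition, and the term for \<open>z = \<one>\<close> is \<open>f x\<close> itself.\<close>
lemma odot_pdelta_one_right:
  assumes f: "f \<in> Lip1 G D T"
  shows "odot G T f (pdelta G D \<one>\<^bsub>G\<^esub>) = f"
proof (rule extensionalityI[OF odot_extensional Lip1D(1)[OF f]])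
  fix x assume x: "x \<in> carrier G"
  show "odot G T f (pdelta G D \<one>\<^bsub>G\<^esub>) x = f x"
  proof (rule order_antisym)
    show "odot G T f (pdelta G D \<one>\<^bsub>G\<^esub>) x \<le> f x"
    proof (rule odot_le[OF x])
      fix y z assume yz: "y \<in> carrier G" "z \<in> carrier G" "y \<otimes>\<^bsub>G\<^esub> z = x"
      then have "D z \<one>\<^bsub>G\<^esub> = D x y" using D_mult_left[of z "\<one>\<^bsub>G\<^esub>" y] by simp
      then show "T (f y) (pdelta G D \<one>\<^bsub>G\<^esub> z) \<le> f x"
        using Lip1D(3)[OF f x yz(1)] T_commute D_closed Lip1_in_Delta_plus[OF f] x yz
        by (simp add: pdelta_apply)
    qed
    show "f x \<le> odot G T f (pdelta G D \<one>\<^bsub>G\<^esub>) x"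
      using odot_ge[OF Lip1D(2)[OF f] pdelta_funcset[OF G.one_closed] x G.one_closed] x
      by (simp add: pdelta_apply D_self T_H0_right Lip1_in_Delta_plus[OF f])
  qed
qed

lemma odot_pdelta_one_left:
  assumes f: "f \<in> Lip1 G D T"
  shows "odot G T (pdelta G D \<one>\<^bsub>G\<^esub>) f = f"
proof (rule extensionalityI[OF odot_extensional Lip1D(1)[OF f]])
  fix x assume x: "x \<in> carrier G"
  show "odot G T (pdelta G D \<one>\<^bsub>G\<^esub>) f x = f x"
  proof (rule order_antisym)
    show "odot G T (pdelta G D \<one>\<^bsub>G\<^esub>) f x \<le> f x"
    proof (rule odot_le[OF x])
      fix y z assume yz: "y \<in> carrier G" "z \<in> carrier G" "y \<otimes>\<^bsub>G\<^esub> z = x"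
      then have "D y \<one>\<^bsub>G\<^esub> = D x z" using D_mult_right[of y "\<one>\<^bsub>G\<^esub>" z] by simp
      then show "T (pdelta G D \<one>\<^bsub>G\<^esub> y) (f z) \<le> f x"
        using Lip1D(3)[OF f x yz(2)] yz by (simp add: pdelta_apply)
    qed
    show "f x \<le> odot G T (pdelta G D \<one>\<^bsub>G\<^esub>) f x"
      using odot_ge[OF pdelta_funcset[OF G.one_closed] Lip1D(2)[OF f] G.one_closed x] x
      by (simp add: pdelta_apply D_self T_H0_left Lip1_in_Delta_plus[OF f])
  qed
qed

lemma bracket_apply: "x \<in> carrier G \<Longrightarrow> bracket G T f U x = T (f x) U"
  unfolding bracket_def by simp

lemma bracket_funcset:
  "f \<in> carrier G \<rightarrow> Delta_plus \<Longrightarrow> U \<in> Delta_plus \<Longrightarrow> bracket G T f U \<in> carrier G \<rightarrow> Delta_plus"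
  by (auto simp: bracket_apply Pi_iff intro!: T_closed)

lemma bracket_in_Lip1:
  assumes f: "f \<in> Lip1 G D T" and U: "U \<in> Delta_plus"
  shows "bracket G T f U \<in> Lip1 G D T"
proof (rule Lip1I)
  show "bracket G T f U \<in> extensional (carrier G)" unfolding bracket_def by simp
  show "bracket G T f U \<in> carrier G \<rightarrow> Delta_plus" using bracket_funcset[OF Lip1D(2)[OF f] U] .
  fix x y assume xy: "x \<in> carrier G" "y \<in> carrier G"
  have "T (D x y) (bracket G T f U y) = T (T (D x y) (f y)) U"
    using xy U by (simp add: bracket_apply T_assoc D_closed Lip1_in_Delta_plus[OF f])
  also have "\<dots> \<le> T (f x) U"
    using T_mono_left[OF _ _ U Lip1D(3)[OF f xy]] xy by (simp add: T_closed D_closed Lip1_in_Delta_plus[OF f])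
  finally show "T (D x y) (bracket G T f U y) \<le> bracket G T f U x" using xy by (simp add: bracket_apply)
qed

lemma bracket_H0: "f \<in> Lip1 G D T \<Longrightarrow> bracket G T f H0 = f"
  by (rule extensionalityI[of _ "carrier G"])
    (auto simp: bracket_def T_H0_right Lip1_in_Delta_plus dest: Lip1D(1))

lemma bracket_bracket:
  "f \<in> carrier G \<rightarrow> Delta_plus \<Longrightarrow> U \<in> Delta_plus \<Longrightarrow> V \<in> Delta_plus \<Longrightarrow>
    bracket G T (bracket G T f U) V = bracket G T f (T U V)"
  unfolding bracket_def by (intro restrict_ext) (auto simp: T_assoc Pi_iff)

definition comp_inv :: "('a \<Rightarrow> dfun) \<Rightarrow> 'a \<Rightarrow> dfun" where
  "comp_inv f = restrict (\<lambda>x. f (inv\<^bsub>G\<^esub> x)) (carrier G)"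

lemma comp_inv_in_Lip1:
  assumes f: "f \<in> Lip1 G D T"
  shows "comp_inv f \<in> Lip1 G D T"
proof (rule Lip1I)
  show "comp_inv f \<in> extensional (carrier G)" unfolding comp_inv_def by simp
  show "comp_inv f \<in> carrier G \<rightarrow> Delta_plus" using Lip1D(2)[OF f] by (auto simp: comp_inv_def)
  fix x y assume "x \<in> carrier G" "y \<in> carrier G"
  then show "T (D x y) (comp_inv f y) \<le> comp_inv f x"
    using Lip1D(3)[OF f, of "inv\<^bsub>G\<^esub> x" "inv\<^bsub>G\<^esub> y"] D_inv by (simp add: comp_inv_def)
qed

lemma comp_inv_comp_inv: "f \<in> Lip1 G D T \<Longrightarrow> comp_inv (comp_inv f) = f"
  by (rule extensionalityI[of _ "carrier G"]) (auto simp: comp_inv_def dest: Lip1D(1))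

lemma PiGE:
  assumes "f \<in> PiG G D T"
  obtains a where "pm_cauchy (carrier G) D a" "\<And>x. x \<in> carrier G \<Longrightarrow> wconv (\<lambda>n. D (a n) x) (f x) sequentially"
  using assms unfolding PiG_def by blast

lemma PiG_subset_Lip1: "PiG G D T \<subseteq> Lip1 G D T"
  unfolding PiG_def by blast

lemma pm_cauchy_in_carrier: "pm_cauchy (carrier G) D a \<Longrightarrow> a n \<in> carrier G"
  unfolding pm_cauchy_def by auto

lemma comp_inv_in_PiG:
  assumes f: "f \<in> PiG G D T"
  shows "comp_inv f \<in> PiG G D T"
proof -
  obtain a where a: "pm_cauchy (carrier G) D a" "\<And>x. x \<in> carrier G \<Longrightarrow> wconv (\<lambda>n. D (a n) x) (f x) sequentially"
    using PiGE[OF f] by blast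
  note a_in = pm_cauchy_in_carrier[OF a(1)]
  have "pm_cauchy (carrier G) D (\<lambda>n. inv\<^bsub>G\<^esub> (a n))"
    using a(1) a_in D_inv unfolding pm_cauchy_def by (auto simp: case_prod_beta)
  moreover have "wconv (\<lambda>n. D (inv\<^bsub>G\<^esub> (a n)) x) (comp_inv f x) sequentially" if "x \<in> carrier G" for x
    using a(2)[of "inv\<^bsub>G\<^esub> x"] D_inv[of "a n" "inv\<^bsub>G\<^esub> x" for n] a_in that by (simp add: comp_inv_def)
  ultimately show ?thesis
    using comp_inv_in_Lip1 f PiG_subset_Lip1 unfolding PiG_def by blast
qed

lemma pdelta_in_PiG: assumes a: "a \<in> carrier G" shows "pdelta G D a \<in> PiG G D T"
proof -
  have "pm_cauchy (carrier G) D (\<lambda>n. a)"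
    unfolding pm_cauchy_def wconv_def using a by (simp add: D_self prod.case_eq_if)
  moreover have "wconv (\<lambda>n. D a x) (pdelta G D a x) sequentially" if "x \<in> carrier G" for x
    using that a D_commute wconv_const by (simp add: pdelta_apply)
  ultimately show ?thesis unfolding PiG_def using pdelta_in_Lip1[OF a] by blast
qed

text \<open>For \<open>f \<in> \<Pi>(G)\<close> with defining sequence \<open>a\<close>: \<open>f (a m)\<close> is the limit of \<open>D (a n) (a m)\<close>,
  which is uniformly close to \<open>H0\<close> for large \<open>m\<close>.\<close>
lemma wconv_H0_along_cauchy:
  assumes a: "pm_cauchy (carrier G) D a" and f: "f \<in> carrier G \<rightarrow> Delta_plus"
    and conv: "\<And>x. x \<in> carrier G \<Longrightarrow> wconv (\<lambda>n. D (a n) x) (f x) sequentially"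
  shows "wconv (\<lambda>m. f (a m)) H0 sequentially"
proof (rule wconv_H0I)
  note a_in = pm_cauchy_in_carrier[OF a]
  show "f (a i) \<in> Delta_plus" for i using f a_in by blast
  fix t e :: real assume te: "t > 0" "e > 0"
  show "eventually (\<lambda>m. 1 - e < f (a m) (ereal t)) sequentially"
  proof (cases "e \<le> 1")
    case False
    have "0 \<le> f (a m) (ereal t)" for m using Delta_plusD(2) f a_in by blast
    then show ?thesis using False by (intro always_eventually allI) (simp add: add.commute less_le_trans[of _ 0])
  next
    case True
    have "((\<lambda>i. (case i of (n, p) \<Rightarrow> D (a n) (a p)) (ereal (t/2))) \<longlongrightarrow> H0 (ereal (t/2)))
            (sequentially \<times>\<^sub>F sequentially)"
      using a unfolding pm_cauchy_def by (intro wconvD[OF _ isCont_H0]) (use te in auto)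
    from order_tendstoD(1)[OF this, of "1 - e/2"] te
    obtain N where N: "\<And>m n. m \<ge> N \<Longrightarrow> n \<ge> N \<Longrightarrow> 1 - e/2 < D (a n) (a m) (ereal (t/2))"
      unfolding eventually_prod_sequentially by (auto simp: H0_def)
    have "1 - e < f (a m) (ereal t)" if m: "N \<le> m" for m
    proof -
      let ?S = "step_dfun (t/2) (1 - e/2)"
      have S: "?S \<in> Delta_plus" using step_dfun_in_Delta_plus te True by simp
      have "?S \<le> f (a m)"
      proof (rule wconv_le[OF S _ wconv_const conv[OF a_in]])
        show "f (a m) \<in> Delta_plus" using f a_in by blast
        have "?S \<le> D (a n) (a m)" if "N \<le> n" for n
          using step_dfun_le[OF D_closed[OF a_in a_in]] N[OF m that] by simp
        then show "eventually (\<lambda>n. ?S (ereal s) \<le> D (a n) (a m) (ereal s)) sequentially" for s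
          unfolding eventually_sequentially by (blast dest: le_funD)
      qed simp
      then show ?thesis using step_dfun_leD[of "t/2" "1 - e/2" "f (a m)" t] te by simp
    qed
    then show ?thesis unfolding eventually_sequentially by blast
  qed
qed

context
  fixes f g
  assumes f: "f \<in> Lip1 G D T" and g: "g \<in> Lip1 G D T"
    and fg: "odot G T f g = pdelta G D \<one>\<^bsub>G\<^esub>"
begin

lemma T_sup_eq_H0_of_right_inverse: "T (dsup (f ` carrier G)) (dsup (g ` carrier G)) = H0"
proof -
  have sup_in: "dsup (h ` carrier G) \<in> Delta_plus" if "h \<in> Lip1 G D T" for h
    using dsup_in_Delta_plus[of "h ` carrier G"] Lip1D(2)[OF that] by auto
  have sup_upper: "h x \<le> dsup (h ` carrier G)" if "h \<in> Lip1 G D T" "x \<in> carrier G" for h x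
    using dsup_upper[of "h ` carrier G" "h x"] Lip1D(2)[OF that(1)] that(2) by auto
  have "odot G T f g \<one>\<^bsub>G\<^esub> \<le> T (dsup (f ` carrier G)) (dsup (g ` carrier G))"
  proof (rule odot_le)
    fix y z assume "y \<in> carrier G" "z \<in> carrier G"
    then show "T (f y) (g z) \<le> T (dsup (f ` carrier G)) (dsup (g ` carrier G))"
      using T_mono[OF _ sup_in[OF f] _ sup_in[OF g] sup_upper[OF f] sup_upper[OF g]] Lip1_in_Delta_plus f g
      by blast
  qed simp
  then have "H0 \<le> T (dsup (f ` carrier G)) (dsup (g ` carrier G))"
    by (simp add: fg pdelta_apply D_self)
  then show ?thesis
    using Delta_plus_le_H0[OF T_closed[OF sup_in[OF f] sup_in[OF g]]] by (simp add: order_antisym)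
qed

lemma T_le_D_of_right_inverse:
  assumes "y \<in> carrier G" "w \<in> carrier G"
  shows "T (f y) (g (inv\<^bsub>G\<^esub> w)) \<le> D y w"
  using odot_ge[OF Lip1D(2)[OF f] Lip1D(2)[OF g], of y "inv\<^bsub>G\<^esub> w"] assms
  by (simp add: fg pdelta_apply D_div_one)

text \<open>The supremum defining \<open>(f \<odot> g) \<one> = H0\<close> is approached by terms \<open>f y \<star> g (y\<inverse>)\<close>.\<close>
lemma ex_seq_above_H0_approx:
  obtains Y where "\<And>n. Y n \<in> carrier G" "\<And>n. H0_approx n \<le> f (Y n)" "\<And>n. H0_approx n \<le> g (inv\<^bsub>G\<^esub> (Y n))"
proof -
  have "\<exists>y\<in>carrier G. H0_approx n \<le> f y \<and> H0_approx n \<le> g (inv\<^bsub>G\<^esub> y)" for n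
  proof -
    define r where "r = 1 / (real n + 1)"
    have r: "0 < r" unfolding r_def by simp
    have "odot G T f g \<one>\<^bsub>G\<^esub> (ereal r) = 1"
      using r by (simp add: fg pdelta_apply D_self H0_def)
    then have "1 - r < odot G T f g \<one>\<^bsub>G\<^esub> (ereal r)" using r by simp
    then obtain y z where yz: "y \<in> carrier G" "z \<in> carrier G" "y \<otimes>\<^bsub>G\<^esub> z = \<one>\<^bsub>G\<^esub>"
      "1 - r < T (f y) (g z) (ereal r)"
      using less_odotD[OF Lip1D(2)[OF f] Lip1D(2)[OF g]] by blast
    have z: "z = inv\<^bsub>G\<^esub> y" using G.inv_equality[OF G.inv_comm[OF yz(3,1,2)] yz(1,2)] by simp
    have fy: "f y \<in> Delta_plus" and gz: "g z \<in> Delta_plus"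
      using yz Lip1_in_Delta_plus f g by auto
    have "H0_approx n \<le> T (f y) (g z)"
      unfolding H0_approx_def r_def[symmetric] using yz(4) by (intro step_dfun_le T_closed fy gz) simp
    then show ?thesis
      using yz(1) z order_trans[OF _ T_le_left[OF fy gz]] order_trans[OF _ T_le_right[OF fy gz]] by blast
  qed
  then have "\<exists>Y. \<forall>n. Y n \<in> carrier G \<and> H0_approx n \<le> f (Y n) \<and> H0_approx n \<le> g (inv\<^bsub>G\<^esub> (Y n))"
    by (subst choice_iff[symmetric]) blast
  then show thesis using that by blast
qed

end

end

section \<open>Continuous triangle functions: the group \<open>\<Pi>(G)\<close>\<close>

locale continuous_pm_group = pm_group + continuous_triangle_fun T

context continuous_pm_group
begin

lemma odot_comp_inv_le:
  assumes f: "f \<in> PiG G D T" and x: "x \<in> carrier G"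
  shows "odot G T f (comp_inv f) x \<le> D x \<one>\<^bsub>G\<^esub>"
proof (rule odot_le[OF x])
  obtain a where a: "pm_cauchy (carrier G) D a"
    "\<And>x. x \<in> carrier G \<Longrightarrow> wconv (\<lambda>n. D (a n) x) (f x) sequentially"
    using PiGE[OF f] by blast
  note a_in = pm_cauchy_in_carrier[OF a(1)]
  note f_in = Lip1_in_Delta_plus[OF subsetD[OF PiG_subset_Lip1 f]]
  fix y z assume yz: "y \<in> carrier G" "z \<in> carrier G" "y \<otimes>\<^bsub>G\<^esub> z = x"
  have iz: "inv\<^bsub>G\<^esub> z \<in> carrier G" using yz by simp
  have le: "T (D (a n) y) (D (a n) (inv\<^bsub>G\<^esub> z)) \<le> D x \<one>\<^bsub>G\<^esub>" for n
  proof -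
    have "T (D (a n) y) (D (a n) (inv\<^bsub>G\<^esub> z)) \<le> D y (inv\<^bsub>G\<^esub> z)"
      using D_triangle[OF yz(1) a_in iz] D_commute a_in yz by simp
    also have "\<dots> = D x \<one>\<^bsub>G\<^esub>" using D_div_one[OF yz(1), of "inv\<^bsub>G\<^esub> z"] yz by simp
    finally show ?thesis .
  qed
  have "T (f y) (f (inv\<^bsub>G\<^esub> z)) \<le> D x \<one>\<^bsub>G\<^esub>"
  proof (rule wconv_le[OF T_closed[OF f_in[OF yz(1)] f_in[OF iz]] D_closed[OF x G.one_closed] _ wconv_const])
    show "wconv (\<lambda>n. T (D (a n) y) (D (a n) (inv\<^bsub>G\<^esub> z))) (T (f y) (f (inv\<^bsub>G\<^esub> z))) sequentially"
      by (rule wconv_T[OF D_closed[OF a_in yz(1)] f_in[OF yz(1)] D_closed[OF a_in iz] f_in[OF iz]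
            a(2)[OF yz(1)] a(2)[OF iz]])
  qed (use le in \<open>auto intro!: always_eventually dest: le_funD\<close>)
  then show "T (f y) (comp_inv f z) \<le> D x \<one>\<^bsub>G\<^esub>" using yz by (simp add: comp_inv_def)
qed

text \<open>Lower bound: the terms \<open>f (x a\<^sub>m) \<star> f (a\<^sub>m\<inverse>)\<close> dominate \<open>D x \<one> \<star> f a\<^sub>m \<star> f a\<^sub>m\<close>,
  and \<open>f a\<^sub>m \<rightarrow> H0\<close> along the defining Cauchy sequence.\<close>
lemma D_one_le_odot_comp_inv:
  assumes f: "f \<in> PiG G D T" and x: "x \<in> carrier G"
  shows "D x \<one>\<^bsub>G\<^esub> \<le> odot G T f (comp_inv f) x"
proof -
  obtain a where a: "pm_cauchy (carrier G) D a"
    "\<And>x. x \<in> carrier G \<Longrightarrow> wconv (\<lambda>n. D (a n) x) (f x) sequentially"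
    using PiGE[OF f] by blast
  note a_in = pm_cauchy_in_carrier[OF a(1)]
  have fL: "f \<in> Lip1 G D T" using f PiG_subset_Lip1 by blast
  note f_in = Lip1_in_Delta_plus[OF fL]
  have fg: "f \<in> carrier G \<rightarrow> Delta_plus" "comp_inv f \<in> carrier G \<rightarrow> Delta_plus"
    using Lip1D(2) fL comp_inv_in_Lip1 by blast+
  have Dx: "D x \<one>\<^bsub>G\<^esub> \<in> Delta_plus" using D_closed x by simp
  have fa: "wconv (\<lambda>m. f (a m)) H0 sequentially"
    using wconv_H0_along_cauchy[OF a(1) Lip1D(2)[OF fL] a(2)] .
  have lim: "wconv (\<lambda>m. T (T (D x \<one>\<^bsub>G\<^esub>) (f (a m))) (f (a m))) (D x \<one>\<^bsub>G\<^esub>) sequentially"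
    using wconv_T[OF T_closed[OF Dx f_in[OF a_in]] T_closed[OF Dx H0_in_Delta_plus] f_in[OF a_in]
        H0_in_Delta_plus wconv_T[OF Dx Dx f_in[OF a_in] H0_in_Delta_plus wconv_const fa] fa]
    by (simp add: T_H0_right Dx)
  have "T (T (D x \<one>\<^bsub>G\<^esub>) (f (a m))) (f (a m)) \<le> odot G T f (comp_inv f) x" for m
  proof -
    have xa: "x \<otimes>\<^bsub>G\<^esub> a m \<in> carrier G" "inv\<^bsub>G\<^esub> (a m) \<in> carrier G" using x a_in by auto
    have "D (x \<otimes>\<^bsub>G\<^esub> a m) (a m) = D x \<one>\<^bsub>G\<^esub>" using D_mult_right[OF x G.one_closed a_in[of m]] a_in by simp
    then have "T (D x \<one>\<^bsub>G\<^esub>) (f (a m)) \<le> f (x \<otimes>\<^bsub>G\<^esub> a m)" using Lip1D(3)[OF fL xa(1) a_in[of m]] by simp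
    then have "T (T (D x \<one>\<^bsub>G\<^esub>) (f (a m))) (f (a m)) \<le> T (f (x \<otimes>\<^bsub>G\<^esub> a m)) (comp_inv f (inv\<^bsub>G\<^esub> (a m)))"
      using T_mono_left[OF T_closed[OF Dx f_in[OF a_in]] f_in[OF xa(1)] f_in[OF a_in]] a_in
      by (simp add: comp_inv_def)
    also have "\<dots> \<le> odot G T f (comp_inv f) (x \<otimes>\<^bsub>G\<^esub> a m \<otimes>\<^bsub>G\<^esub> inv\<^bsub>G\<^esub> (a m))"
      by (rule odot_ge[OF fg xa])
    finally show ?thesis using x a_in by (simp add: G.m_assoc)
  qed
  then show ?thesis
    by (intro wconv_le[OF Dx odot_in_Delta_plus[OF fg x] lim wconv_const]) (auto intro!: always_eventually dest: le_funD)
qed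

lemma odot_comp_inv_right:
  assumes "f \<in> PiG G D T"
  shows "odot G T f (comp_inv f) = pdelta G D \<one>\<^bsub>G\<^esub>"
proof (rule extensionalityI[OF odot_extensional])
  show "pdelta G D \<one>\<^bsub>G\<^esub> \<in> extensional (carrier G)" by (simp add: pdelta_def)
  fix x assume x: "x \<in> carrier G"
  show "odot G T f (comp_inv f) x = pdelta G D \<one>\<^bsub>G\<^esub> x"
    unfolding pdelta_apply[OF x]
    by (rule order_antisym[OF odot_comp_inv_le[OF assms x] D_one_le_odot_comp_inv[OF assms x]])
qed

lemma odot_comp_inv_left:
  assumes "f \<in> PiG G D T"
  shows "odot G T (comp_inv f) f = pdelta G D \<one>\<^bsub>G\<^esub>"
  using odot_comp_inv_right[OF comp_inv_in_PiG[OF assms]] comp_inv_comp_inv[of f] assms PiG_subset_Lip1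
  by auto

context
  fixes f g Y
  assumes f: "f \<in> Lip1 G D T" and g: "g \<in> Lip1 G D T"
    and fg: "odot G T f g = pdelta G D \<one>\<^bsub>G\<^esub>"
    and Y: "\<And>n. Y n \<in> carrier G" "\<And>n. H0_approx n \<le> f (Y n)" "\<And>n. H0_approx n \<le> g (inv\<^bsub>G\<^esub> (Y n))"
begin

lemma pm_cauchy_of_right_inverse: "pm_cauchy (carrier G) D Y"
  unfolding pm_cauchy_def
proof
  show "range Y \<subseteq> carrier G" using Y(1) by auto
  show "wconv (\<lambda>(n, p). D (Y n) (Y p)) H0 (sequentially \<times>\<^sub>F sequentially)"
  proof (rule wconv_H0I)
    show "(case i of (n, p) \<Rightarrow> D (Y n) (Y p)) \<in> Delta_plus" for i
      using D_closed Y(1) by (simp add: prod.case_eq_if)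
    fix t e :: real assume te: "t > 0" "e > 0"
    have "wconv (\<lambda>N. T (H0_approx N) (H0_approx N)) H0 sequentially"
      using wconv_T[OF H0_approx_in_Delta_plus H0_in_Delta_plus H0_approx_in_Delta_plus H0_in_Delta_plus
          wconv_H0_approx wconv_H0_approx]
      by (simp add: T_H0_right H0_in_Delta_plus)
    from order_tendstoD(1)[OF wconvD[OF this isCont_H0[OF te(1)]], of "1 - e"] te
    obtain N where N: "1 - e < T (H0_approx N) (H0_approx N) (ereal t)"
      unfolding eventually_sequentially by (auto simp: H0_def)
    have "1 - e < D (Y n) (Y m) (ereal t)" if "N \<le> m" "N \<le> n" for m n
    proof -
      have "T (H0_approx N) (H0_approx N) \<le> T (H0_approx n) (H0_approx m)"
        using T_mono H0_approx_in_Delta_plus H0_approx_mono that by simp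
      also have "\<dots> \<le> T (f (Y n)) (g (inv\<^bsub>G\<^esub> (Y m)))"
        using T_mono[OF H0_approx_in_Delta_plus _ H0_approx_in_Delta_plus _ Y(2,3)] Y(1)
          Lip1_in_Delta_plus f g by simp
      also have "\<dots> \<le> D (Y n) (Y m)" using T_le_D_of_right_inverse[OF f g fg] Y(1) by simp
      finally show ?thesis using N by (auto dest: le_funD[of _ _ "ereal t"])
    qed
    then show "eventually (\<lambda>i. 1 - e < (case i of (n, p) \<Rightarrow> D (Y n) (Y p)) (ereal t))
        (sequentially \<times>\<^sub>F sequentially)"
      unfolding eventually_prod_sequentially by auto
  qed
qed

text \<open>Squeeze \<open>D (Y n) x\<close> between \<open>f x \<star> \<epsilon>\<^sub>n \<le> f x \<star> g (Y\<^sub>n\<inverse>) \<le> D x (Y n)\<close> and, via the Lipschitz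
  condition, \<open>D (Y n) x \<star> \<epsilon>\<^sub>n \<le> D x (Y n) \<star> f (Y n) \<le> f x\<close>.\<close>
lemma wconv_of_right_inverse:
  assumes x: "x \<in> carrier G"
  shows "wconv (\<lambda>n. D (Y n) x) (f x) sequentially"
proof -
  note f_in = Lip1_in_Delta_plus[OF f] and g_in = Lip1_in_Delta_plus[OF g]
  have Yi: "inv\<^bsub>G\<^esub> (Y n) \<in> carrier G" for n using Y(1) by simp
  show ?thesis
  proof (rule wconv_squeeze[OF f_in[OF x] D_closed[OF Y(1) x] H0_approx_in_Delta_plus H0_approx_mono wconv_H0_approx])
    show "wconv (\<lambda>n. T (f x) (H0_approx n)) (f x) sequentially"
      using wconv_T[OF f_in[OF x] f_in[OF x] H0_approx_in_Delta_plus H0_in_Delta_plus wconv_const wconv_H0_approx]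
      by (simp add: T_H0_right f_in[OF x])
    fix n
    have "T (f x) (H0_approx n) \<le> T (f x) (g (inv\<^bsub>G\<^esub> (Y n)))"
      using T_mono_right[OF f_in[OF x] H0_approx_in_Delta_plus g_in[OF Yi] Y(3)] .
    also have "\<dots> \<le> D x (Y n)" using T_le_D_of_right_inverse[OF f g fg x Y(1)] .
    finally show "T (f x) (H0_approx n) \<le> D (Y n) x" using D_commute x Y(1) by simp
    have "T (D (Y n) x) (H0_approx n) \<le> T (D x (Y n)) (f (Y n))"
      using T_mono_right[OF D_closed[OF x Y(1)] H0_approx_in_Delta_plus f_in[OF Y(1)] Y(2)] D_commute x Y(1)
      by simp
    also have "\<dots> \<le> f x" using Lip1D(3)[OF f x Y(1)] .
    finally show "T (D (Y n) x) (H0_approx n) \<le> f x" .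
  qed
qed

end

lemma PiG_of_right_inverse:
  assumes f: "f \<in> Lip1 G D T" and g: "g \<in> Lip1 G D T"
    and fg: "odot G T f g = pdelta G D \<one>\<^bsub>G\<^esub>"
  shows "f \<in> PiG G D T"
proof -
  obtain Y where Y: "\<And>n. Y n \<in> carrier G" "\<And>n. H0_approx n \<le> f (Y n)" "\<And>n. H0_approx n \<le> g (inv\<^bsub>G\<^esub> (Y n))"
    using ex_seq_above_H0_approx[OF f g fg] by blast
  show ?thesis
    unfolding PiG_def using f pm_cauchy_of_right_inverse[OF f g fg Y] wconv_of_right_inverse[OF f g fg Y]
    by blast
qed

text \<open>In a complete space the Cauchy sequence defining \<open>f\<close> has a limit \<open>a\<close>, and the triangle
  inequality through \<open>a n\<close> gives \<open>f x = D x a\<close> in both directions.\<close>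
lemma PiG_eq_pdelta_image:
  assumes complete: "pm_complete (carrier G) D"
  shows "PiG G D T = pdelta G D ` carrier G"
proof (intro subset_antisym subsetI)
  fix f assume f: "f \<in> PiG G D T"
  obtain a where a: "pm_cauchy (carrier G) D a"
    "\<And>x. x \<in> carrier G \<Longrightarrow> wconv (\<lambda>n. D (a n) x) (f x) sequentially"
    using PiGE[OF f] by blast
  note a_in = pm_cauchy_in_carrier[OF a(1)]
  obtain b where b: "b \<in> carrier G" "wconv (\<lambda>n. D (a n) b) H0 sequentially"
    using complete a(1) unfolding pm_complete_def by blast
  have fL: "f \<in> Lip1 G D T" using f PiG_subset_Lip1 by blast
  note f_in = Lip1_in_Delta_plus[OF fL]
  have "f x = D x b" if x: "x \<in> carrier G" for x
  proof (rule order_antisym)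
    have "wconv (\<lambda>n. D b (a n)) H0 sequentially" using b D_commute a_in by simp
    then have "wconv (\<lambda>n. T (D b (a n)) (D (a n) x)) (f x) sequentially"
      using wconv_T[OF D_closed[OF b(1) a_in] H0_in_Delta_plus D_closed[OF a_in x] f_in[OF x] _ a(2)[OF x]]
      by (simp add: T_H0_left f_in x)
    then have "f x \<le> D b x"
      by (rule wconv_le[OF f_in[OF x] D_closed[OF b(1) x] _ wconv_const])
        (simp, intro always_eventually allI le_funD[OF D_triangle[OF b(1) a_in x]])
    then show "f x \<le> D x b" using D_commute x b by simp
  next
    have "wconv (\<lambda>n. T (D (a n) b) (D b x)) (D b x) sequentially"
      using wconv_T[OF D_closed[OF a_in b(1)] H0_in_Delta_plus D_closed[OF b(1) x] D_closed[OF b(1) x] b(2) wconv_const]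
      by (simp add: T_H0_left D_closed b x)
    then have "D b x \<le> f x"
      by (rule wconv_le[OF D_closed[OF b(1) x] f_in[OF x] _ a(2)[OF x]])
        (simp, intro always_eventually allI le_funD[OF D_triangle[OF a_in b(1) x]])
    then show "D x b \<le> f x" using D_commute x b by simp
  qed
  then have "f = pdelta G D b"
    using Lip1D(1)[OF fL] by (intro extensionalityI[of _ "carrier G"]) (auto simp: pdelta_def)
  then show "f \<in> pdelta G D ` carrier G" using b(1) by blast
qed (use pdelta_in_PiG in blast)

end

section \<open>Sup-continuous triangle functions: the monoid \<open>Lip\<^sup>1\<close>\<close>

locale sup_continuous_pm_group = pm_group +
  assumes sup_continuous: "sup_continuous_tf T"
begin

lemma T_dsup_le:
  assumes "S \<subseteq> Delta_plus" "S \<noteq> {}" "L \<in> Delta_plus" "\<And>F. F \<in> S \<Longrightarrow> T F L \<le> M"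
  shows "T (dsup S) L \<le> M"
proof -
  have "T (dsup S) L = dsup ((\<lambda>F. T F L) ` S)"
    using sup_continuous assms(1-3) unfolding sup_continuous_tf_def by auto
  also have "\<dots> \<le> M" using assms(2,4) by (intro dsup_least) auto
  finally show ?thesis .
qed

lemma T_odot_le_left:
  assumes "f \<in> carrier G \<rightarrow> Delta_plus" "g \<in> carrier G \<rightarrow> Delta_plus" "u \<in> carrier G" "L \<in> Delta_plus"
    and "\<And>v w. v \<in> carrier G \<Longrightarrow> w \<in> carrier G \<Longrightarrow> v \<otimes>\<^bsub>G\<^esub> w = u \<Longrightarrow> T (T (f v) (g w)) L \<le> M"
  shows "T (odot G T f g u) L \<le> M"
  unfolding odot_apply[OF assms(3)]
  by (rule T_dsup_le[OF odot_terms_subset[OF assms(1,2)] odot_terms_nonempty[OF assms(3)] assms(4)])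
    (auto simp: odot_terms_def intro: assms(5))

lemma T_odot_le_right:
  assumes "f \<in> carrier G \<rightarrow> Delta_plus" "g \<in> carrier G \<rightarrow> Delta_plus" "u \<in> carrier G" "L \<in> Delta_plus"
    and "\<And>v w. v \<in> carrier G \<Longrightarrow> w \<in> carrier G \<Longrightarrow> v \<otimes>\<^bsub>G\<^esub> w = u \<Longrightarrow> T L (T (f v) (g w)) \<le> M"
  shows "T L (odot G T f g u) \<le> M"
  using T_odot_le_left[OF assms(1-4), of M] assms(5) T_commute[OF assms(4)]
    odot_in_Delta_plus[OF assms(1-3)] T_closed assms(1,2) by (auto simp: Pi_iff)

lemma odot_assoc:
  assumes f: "f \<in> carrier G \<rightarrow> Delta_plus" and g: "g \<in> carrier G \<rightarrow> Delta_plus"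
    and h: "h \<in> carrier G \<rightarrow> Delta_plus"
  shows "odot G T (odot G T f g) h = odot G T f (odot G T g h)"
proof (rule extensionalityI[OF odot_extensional odot_extensional])
  fix x assume x: "x \<in> carrier G"
  have fg: "odot G T f g \<in> carrier G \<rightarrow> Delta_plus" and gh: "odot G T g h \<in> carrier G \<rightarrow> Delta_plus"
    using odot_funcset assms by blast+
  have in_D: "f v \<in> Delta_plus" "g v \<in> Delta_plus" "h v \<in> Delta_plus" if "v \<in> carrier G" for v
    using assms that by blast+
  show "odot G T (odot G T f g) h x = odot G T f (odot G T g h) x"
  proof (rule order_antisym)
    show "odot G T (odot G T f g) h x \<le> odot G T f (odot G T g h) x"
    proof (rule odot_le[OF x], rule T_odot_le_left[OF f g])
      fix u z v w assume uz: "u \<in> carrier G" "z \<in> carrier G" "u \<otimes>\<^bsub>G\<^esub> z = x"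
        and vw: "v \<in> carrier G" "w \<in> carrier G" "v \<otimes>\<^bsub>G\<^esub> w = u"
      have "T (T (f v) (g w)) (h z) = T (f v) (T (g w) (h z))" using T_assoc in_D vw uz by simp
      also have "\<dots> \<le> T (f v) (odot G T g h (w \<otimes>\<^bsub>G\<^esub> z))"
        using T_mono_right odot_ge[OF g h vw(2) uz(2)] in_D vw uz T_closed odot_in_Delta_plus[OF g h] by simp
      also have "\<dots> \<le> odot G T f (odot G T g h) (v \<otimes>\<^bsub>G\<^esub> (w \<otimes>\<^bsub>G\<^esub> z))"
        using odot_ge[OF f gh] vw uz by simp
      finally show "T (T (f v) (g w)) (h z) \<le> odot G T f (odot G T g h) x"
        using vw uz by (simp add: G.m_assoc[symmetric])
    qed (use in_D in auto)
    show "odot G T f (odot G T g h) x \<le> odot G T (odot G T f g) h x"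
    proof (rule odot_le[OF x], rule T_odot_le_right[OF g h])
      fix v s w z assume vs: "v \<in> carrier G" "s \<in> carrier G" "v \<otimes>\<^bsub>G\<^esub> s = x"
        and wz: "w \<in> carrier G" "z \<in> carrier G" "w \<otimes>\<^bsub>G\<^esub> z = s"
      have "T (f v) (T (g w) (h z)) = T (T (f v) (g w)) (h z)" using T_assoc in_D vs wz by simp
      also have "\<dots> \<le> T (odot G T f g (v \<otimes>\<^bsub>G\<^esub> w)) (h z)"
        using T_mono_left odot_ge[OF f g vs(1) wz(1)] in_D vs wz T_closed odot_in_Delta_plus[OF f g] by simp
      also have "\<dots> \<le> odot G T (odot G T f g) h ((v \<otimes>\<^bsub>G\<^esub> w) \<otimes>\<^bsub>G\<^esub> z)"
        using odot_ge[OF fg h] vs wz by simp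
      finally show "T (f v) (T (g w) (h z)) \<le> odot G T (odot G T f g) h x"
        using vs wz by (simp add: G.m_assoc)
    qed (use in_D in auto)
  qed
qed

lemma odot_in_Lip1:
  assumes f: "f \<in> Lip1 G D T" and g: "g \<in> Lip1 G D T"
  shows "odot G T f g \<in> Lip1 G D T"
proof (rule Lip1I[OF odot_extensional odot_funcset[OF Lip1D(2)[OF f] Lip1D(2)[OF g]]])
  fix x x' assume xx: "x \<in> carrier G" "x' \<in> carrier G"
  show "T (D x x') (odot G T f g x') \<le> odot G T f g x"
  proof (rule T_odot_le_right[OF Lip1D(2)[OF f] Lip1D(2)[OF g] xx(2) D_closed[OF xx]])
    fix y z assume yz: "y \<in> carrier G" "z \<in> carrier G" "y \<otimes>\<^bsub>G\<^esub> z = x'"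
    let ?w = "x \<otimes>\<^bsub>G\<^esub> inv\<^bsub>G\<^esub> z"
    have w: "?w \<in> carrier G" "?w \<otimes>\<^bsub>G\<^esub> z = x" using xx yz by (simp_all add: G.m_assoc)
    have "D x x' = D ?w y"
      using D_mult_right[OF w(1) yz(1,2)] w(2) yz(3) by simp
    then have "T (D x x') (T (f y) (g z)) = T (T (D ?w y) (f y)) (g z)"
      using T_assoc D_closed w yz Lip1_in_Delta_plus f g by simp
    also have "\<dots> \<le> T (f ?w) (g z)"
      using T_mono_left[OF _ _ _ Lip1D(3)[OF f w(1) yz(1)]] w yz D_closed T_closed Lip1_in_Delta_plus f g
      by simp
    also have "\<dots> \<le> odot G T f g x"
      using odot_ge[OF Lip1D(2)[OF f] Lip1D(2)[OF g] w(1) yz(2)] w(2) by simp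
    finally show "T (D x x') (T (f y) (g z)) \<le> odot G T f g x" .
  qed
qed

lemma monoid_Lip_monoid: "monoid (Lip_monoid G D T)"
  unfolding Lip_monoid_def
  by (rule monoidI)
    (auto simp: odot_in_Lip1 pdelta_in_Lip1 odot_pdelta_one_left odot_pdelta_one_right
      intro!: odot_assoc dest: Lip1D(2))

lemma odot_bracket:
  assumes f: "f \<in> carrier G \<rightarrow> Delta_plus" and g: "g \<in> carrier G \<rightarrow> Delta_plus"
    and U: "U \<in> Delta_plus" and V: "V \<in> Delta_plus"
  shows "odot G T (bracket G T f U) (bracket G T g V) = bracket G T (odot G T f g) (T U V)"
proof (rule extensionalityI[OF odot_extensional])
  show "bracket G T (odot G T f g) (T U V) \<in> extensional (carrier G)" unfolding bracket_def by simp
  fix x assume x: "x \<in> carrier G"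
  have UV: "T U V \<in> Delta_plus" using T_closed U V by simp
  have terms: "T (bracket G T f U y) (bracket G T g V z) = T (T (f y) (g z)) (T U V)"
    if "y \<in> carrier G" "z \<in> carrier G" for y z
    using that f g U V T_interchange[of "f y" U "g z" V] by (simp add: bracket_apply funcset_mem)
  show "odot G T (bracket G T f U) (bracket G T g V) x = bracket G T (odot G T f g) (T U V) x"
  proof (rule order_antisym)
    show "odot G T (bracket G T f U) (bracket G T g V) x \<le> bracket G T (odot G T f g) (T U V) x"
    proof (rule odot_le[OF x])
      fix y z assume yz: "y \<in> carrier G" "z \<in> carrier G" "y \<otimes>\<^bsub>G\<^esub> z = x"
      have "T (T (f y) (g z)) (T U V) \<le> T (odot G T f g x) (T U V)"
        using T_mono_left[OF _ odot_in_Delta_plus[OF f g x] UV odot_ge[OF f g yz(1,2), unfolded yz(3)]]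
          yz f g by (simp add: T_closed funcset_mem)
      then show "T (bracket G T f U y) (bracket G T g V z) \<le> bracket G T (odot G T f g) (T U V) x"
        using terms[OF yz(1,2)] x by (simp add: bracket_apply)
    qed
    have "T (odot G T f g x) (T U V) \<le> odot G T (bracket G T f U) (bracket G T g V) x"
      by (rule T_odot_le_left[OF f g x UV])
        (use terms odot_ge[OF bracket_funcset[OF f U] bracket_funcset[OF g V]] in force)
    then show "bracket G T (odot G T f g) (T U V) x \<le> odot G T (bracket G T f U) (bracket G T g V) x"
      using x by (simp add: bracket_apply)
  qed
qed

end

section \<open>The units of \<open>Lip\<^sup>1\<close>\<close>

locale continuous_sup_continuous_pm_group =
  continuous_pm_group T G D + sup_continuous_pm_group T G D
  for T :: "dfun \<Rightarrow> dfun \<Rightarrow> dfun" and G :: "('a, 'b) monoid_scheme" and D :: "'a \<Rightarrow> 'a \<Rightarrow> dfun"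
begin

lemma inv_Pi_group: "f \<in> PiG G D T \<Longrightarrow> inv\<^bsub>Pi_group G D T\<^esub> f = comp_inv f"
  by (rule m_inv_eq_in_submonoid[OF monoid_Lip_monoid])
    (use PiG_subset_Lip1 comp_inv_in_PiG odot_comp_inv_right odot_comp_inv_left
      in \<open>auto simp: Pi_group_def Lip_monoid_def\<close>)

lemma bracket_in_Units:
  assumes f: "f \<in> PiG G D T" and U: "U \<in> Units (Delta_monoid T)"
  shows "bracket G T f U \<in> Units (Lip_monoid G D T)"
    and "inv\<^bsub>Lip_monoid G D T\<^esub> (bracket G T f U) = bracket G T (comp_inv f) (inv\<^bsub>Delta_monoid T\<^esub> U)"
proof -
  obtain V where UV: "U \<in> Delta_plus" "V \<in> Delta_plus" "T U V = H0"
    using U Units_Delta_monoid by auto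
  have Lip: "f \<in> Lip1 G D T" "comp_inv f \<in> Lip1 G D T"
    using f PiG_subset_Lip1 comp_inv_in_Lip1 by blast+
  let ?\<phi> = "bracket G T f U" and ?\<psi> = "bracket G T (comp_inv f) V"
  have in_Lip: "?\<phi> \<in> Lip1 G D T" "?\<psi> \<in> Lip1 G D T"
    using bracket_in_Lip1 Lip UV by blast+
  have "odot G T ?\<phi> ?\<psi> = pdelta G D \<one>\<^bsub>G\<^esub>"
    using odot_bracket[OF Lip1D(2)[OF Lip(1)] Lip1D(2)[OF Lip(2)] UV(1,2)] UV(3)
    by (simp add: odot_comp_inv_right[OF f] bracket_H0 pdelta_in_Lip1)
  moreover have "odot G T ?\<psi> ?\<phi> = pdelta G D \<one>\<^bsub>G\<^esub>"
    using odot_bracket[OF Lip1D(2)[OF Lip(2)] Lip1D(2)[OF Lip(1)] UV(2,1)] UV(3) T_commute[OF UV(1,2)]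
    by (simp add: odot_comp_inv_left[OF f] bracket_H0 pdelta_in_Lip1)
  ultimately show "?\<phi> \<in> Units (Lip_monoid G D T)"
    and "inv\<^bsub>Lip_monoid G D T\<^esub> ?\<phi> = bracket G T (comp_inv f) (inv\<^bsub>Delta_monoid T\<^esub> U)"
    using monoid.inv_unique'[OF monoid_Lip_monoid, of ?\<phi> ?\<psi>] in_Lip inv_Delta_monoid_eq[OF UV]
    unfolding Units_def by (auto simp: Lip_monoid_def)
qed

lemma Units_Lip_monoidE:
  assumes "\<phi> \<in> Units (Lip_monoid G D T)"
  obtains f U where "\<phi> = bracket G T f U" "f \<in> PiG G D T" "U \<in> Units (Delta_monoid T)"
proof -
  obtain \<psi> where Lip: "\<phi> \<in> Lip1 G D T" "\<psi> \<in> Lip1 G D T"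
    and \<phi>\<psi>: "odot G T \<phi> \<psi> = pdelta G D \<one>\<^bsub>G\<^esub>"
    using assms unfolding Units_def Lip_monoid_def by auto
  define U where "U = dsup (\<phi> ` carrier G)"
  define V where "V = dsup (\<psi> ` carrier G)"
  have UV: "U \<in> Delta_plus" "V \<in> Delta_plus"
    unfolding U_def V_def using Lip1D(2)[OF Lip(1)] Lip1D(2)[OF Lip(2)] by (auto intro!: dsup_in_Delta_plus)
  have "T U V = H0" unfolding U_def V_def by (rule T_sup_eq_H0_of_right_inverse[OF Lip \<phi>\<psi>])
  then have TVU: "T V U = H0" using T_commute[OF UV] by simp
  define f where "f = bracket G T \<phi> V"
  have "odot G T f (bracket G T \<psi> U) = pdelta G D \<one>\<^bsub>G\<^esub>"
    using odot_bracket[OF Lip1D(2)[OF Lip(1)] Lip1D(2)[OF Lip(2)] UV(2,1)] TVU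
    by (simp add: f_def \<phi>\<psi> bracket_H0 pdelta_in_Lip1)
  then have "f \<in> PiG G D T"
    using PiG_of_right_inverse bracket_in_Lip1 Lip UV unfolding f_def by blast
  moreover have "\<phi> = bracket G T f U"
    using bracket_bracket[OF Lip1D(2)[OF Lip(1)] UV(2,1)] TVU bracket_H0[OF Lip(1)] by (simp add: f_def)
  moreover have "U \<in> Units (Delta_monoid T)"
    using Units_Delta_monoid UV \<open>T U V = H0\<close> by auto
  ultimately show thesis using that by blast
qed

lemma Units_Lip_monoid:
  "Units (Lip_monoid G D T) = {bracket G T f U | f U. f \<in> PiG G D T \<and> U \<in> Units (Delta_monoid T)}"
  using Units_Lip_monoidE bracket_in_Units(1) by blast

lemma Units_Lip_monoid_eq_PiG:
  assumes "Units (Delta_monoid T) = {H0}"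
  shows "Units (Lip_monoid G D T) = PiG G D T"
proof -
  have "Units (Lip_monoid G D T) = (\<lambda>f. bracket G T f H0) ` PiG G D T"
    unfolding Units_Lip_monoid assms by blast
  also have "\<dots> = id ` PiG G D T"
    by (rule image_cong) (use bracket_H0 PiG_subset_Lip1 in auto)
  finally show ?thesis by simp
qed

lemma pdelta_iso_units_of:
  assumes "Units (Delta_monoid T) = {H0}" "pm_complete (carrier G) D"
  shows "pdelta G D \<in> iso G (units_of (Lip_monoid G D T))"
proof -
  have units: "Units (Lip_monoid G D T) = pdelta G D ` carrier G"
    using Units_Lip_monoid_eq_PiG PiG_eq_pdelta_image assms by simp
  then have "pdelta G D \<in> hom G (units_of (Lip_monoid G D T))"
    unfolding hom_def units_of_def by (simp add: Lip_monoid_def pdelta_mult)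
  then show ?thesis
    using inj_on_pdelta units unfolding iso_def bij_betw_def by (simp add: units_of_def)
qed

end

theorem theorem2:
  fixes G :: "('a, 'b) monoid_scheme" and D :: "'a \<Rightarrow> 'a \<Rightarrow> dfun" and T :: "dfun \<Rightarrow> dfun \<Rightarrow> dfun"
  assumes "triangle_function T" and "continuous_tf T" and "sup_continuous_tf T"
    and "invariant_pm_group G D T"
  shows "Units (Lip_monoid G D T) =
           {bracket G T f U | f U. f \<in> PiG G D T \<and> U \<in> Units (Delta_monoid T)}
     \<and> (\<forall>f\<in>PiG G D T. \<forall>U\<in>Units (Delta_monoid T).
          inv\<^bsub>Lip_monoid G D T\<^esub> (bracket G T f U)
            = bracket G T (inv\<^bsub>Pi_group G D T\<^esub> f) (inv\<^bsub>Delta_monoid T\<^esub> U))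
     \<and> (Units (Delta_monoid T) = {H0} \<longrightarrow> Units (Lip_monoid G D T) = PiG G D T)
     \<and> (Units (Delta_monoid T) = {H0} \<and> pm_complete (carrier G) D \<longrightarrow>
          Units (Lip_monoid G D T) = pdelta G D ` carrier G
          \<and> pdelta G D \<in> iso G (units_of (Lip_monoid G D T))
          \<and> (\<forall>a\<in>carrier G. \<forall>b\<in>carrier G. DD G T (pdelta G D a) (pdelta G D b) = D a b))"
proof -
  interpret continuous_sup_continuous_pm_group T G D
    by unfold_locales (use assms in auto)
  show ?thesis
  proof (intro conjI impI ballI)
    show "Units (Lip_monoid G D T) = {bracket G T f U | f U. f \<in> PiG G D T \<and> U \<in> Units (Delta_monoid T)}"
      by (rule Units_Lip_monoid)
    fix f U assume "f \<in> PiG G D T" "U \<in> Units (Delta_monoid T)"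
    then show "inv\<^bsub>Lip_monoid G D T\<^esub> (bracket G T f U)
        = bracket G T (inv\<^bsub>Pi_group G D T\<^esub> f) (inv\<^bsub>Delta_monoid T\<^esub> U)"
      by (simp add: bracket_in_Units(2) inv_Pi_group)
  next
    assume "Units (Delta_monoid T) = {H0}"
    then show "Units (Lip_monoid G D T) = PiG G D T" by (rule Units_Lip_monoid_eq_PiG)
  next
    assume "Units (Delta_monoid T) = {H0} \<and> pm_complete (carrier G) D"
    then show "Units (Lip_monoid G D T) = pdelta G D ` carrier G"
      and "pdelta G D \<in> iso G (units_of (Lip_monoid G D T))"
      by (simp_all add: Units_Lip_monoid_eq_PiG PiG_eq_pdelta_image pdelta_iso_units_of)
  next
    fix a b assume "a \<in> carrier G" "b \<in> carrier G"
    then show "DD G T (pdelta G D a) (pdelta G D b) = D a b" by (rule DD_pdelta)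
  qed
qed

end
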